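(* Let $V$ be a vertex operator algebra, $z\in\mathbb C^\times$, $W_1,W_2$ generalized $V$-modules, $W_3$ an ordinary (respectively generalized) $V$-module, and $F$ a quasi-$P(z)$-intertwining map of type $\binom{W_3}{W_1\,W_2}$. Let $W\subset W_3$ be the span of all homogeneous components (in the generalized $L(0)$-eigenspace decomposition) of the elements $F(w_{(1)}\otimes w_{(2)})\in\overline W_3$, $w_{(1)}\in W_1$, $w_{(2)}\in W_2$. Then $W$ is an ordinary (respectively generalized) $V$-submodule of $W_3$, and the $V$-module $F^\vee(W_3')$ (under $\tau_{P(z)}$) is isomorphic to the contragredient module $W'$; indeed both natural surjections $W_3'\to F^\vee(W_3')$ and $W_3'\to W'$ have kernel $\{\alpha\in W_3'\mid\langle\alpha,W\rangle=0\}$.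
   Context: $V$ is a vertex operator algebra; $L(n)$ are the Virasoro operators. A generalized $V$-module is a weak $V$-module $W=\coprod_{n\in\mathbb C}W_{[n]}$ with $W_{[n]}$ the generalized $L(0)$-eigenspace of eigenvalue $n$, each finite-dimensional, $W_{[n+k]}=0$ for integers $k$ sufficiently negative; ordinary if $L(0)$ is semisimple. $\overline W=\prod_nW_{[n]}$; $W'=\coprod_nW_{[n]}^*$ with $\langle Y'(v,x)\alpha,w\rangle=\langle\alpha,Y(e^{xL(1)}(-x^{-2})^{L(0)}v,x^{-1})w\rangle$. A quasi-$P(z)$-intertwining map of type $\binom{W_3}{W_1\,W_2}$ is a linear $F:W_1\otimes W_2\to\overline W_3$ with $Y_3(v,x_1)F(w_{(1)}\otimes w_{(2)})-F(w_{(1)}\otimes Y_2(v,x_1)w_{(2)})=\mathrm{Res}_{x_0}z^{-1}\delta(\frac{x_1-x_0}{z})F(Y_1(v,x_0)w_{(1)}\otimes w_{(2)})$. $F^\vee(\alpha)(w_{(1)}\otimes w_{(2)})=\langle\alpha,F(w_{(1)}\otimes w_{(2)})\rangle$. $\tau_{P(z)}$ on $(W_1\otimes W_2)^*$: $(\tau_{P(z)}(Y_t(v,x_1))\lambda)(w_{(1)}\otimes w_{(2)})=\mathrm{Res}_{x_0}z^{-1}\delta(\frac{x_1^{-1}-x_0}{z})\lambda(Y_1(e^{x_1L(1)}(-x_1^{-2})^{L(0)}v,x_0)w_{(1)}\otimes w_{(2)})+\lambda(w_{(1)}\otimes Y_2(e^{x_1L(1)}(-x_1^{-2})^{L(0)}v,x_1^{-1})w_{(2)})$,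 where $\tau_{P(z)}(Y_t(v,x))=\sum_n\tau_{P(z)}(v\otimes t^n)x^{-n-1}$ and $v_n$ acts as $\tau_{P(z)}(v\otimes t^n)$. (It is known that $F^\vee(W_3')$ is a $V$-module under this action.) *)

theory Defs
  imports Complex_Main
begin

class cvs = ab_group_add +
  fixes cscale :: "complex \<Rightarrow> 'a \<Rightarrow> 'a"  (infixr "*\<^sub>C" 75)
  assumes cscale_add_right: "a *\<^sub>C (x + y) = a *\<^sub>C x + a *\<^sub>C y"
    and cscale_add_left: "(a + b) *\<^sub>C x = a *\<^sub>C x + b *\<^sub>C x"
    and cscale_cscale: "a *\<^sub>C (b *\<^sub>C x) = (a * b) *\<^sub>C x"
    and cscale_one: "1 *\<^sub>C x = x"

lemma cvs_vector_space: "vector_space (cscale :: complex \<Rightarrow> 'a::cvs \<Rightarrow> 'a)"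
  by unfold_locales (simp_all add: cscale_add_right cscale_add_left cscale_cscale cscale_one)

instantiation complex :: cvs
begin
definition cscale_complex :: "complex \<Rightarrow> complex \<Rightarrow> complex" where
  "cscale_complex a x = a * x"
instance by standard (simp_all add: cscale_complex_def algebra_simps)
end

abbreviation cspan :: "'a::cvs set \<Rightarrow> 'a set" where
  "cspan \<equiv> module.span cscale"

abbreviation csubspace :: "'a::cvs set \<Rightarrow> bool" where
  "csubspace \<equiv> module.subspace cscale"

definition fin_dim :: "'a::cvs set \<Rightarrow> bool" where
  "fin_dim S \<longleftrightarrow> (\<exists>B. finite B \<and> S \<subseteq> cspan B)"

definition clinear_on :: "'a::cvs set \<Rightarrow> ('a \<Rightarrow> 'b::cvs) \<Rightarrow> bool" where
  "clinear_on M f \<longleftrightarrow> (\<forall>x\<in>M. \<forall>y\<in>M. f (x + y) = f x + f y) \<and>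
                      (\<forall>a. \<forall>x\<in>M. f (a *\<^sub>C x) = a *\<^sub>C f x)"

definition dsum_decomp :: "'a::cvs set \<Rightarrow> ('i \<Rightarrow> 'a set) \<Rightarrow> bool" where
  "dsum_decomp M S \<longleftrightarrow> (\<forall>w\<in>M. \<exists>f. finite {k. f k \<noteq> 0} \<and> (\<forall>k. f k \<in> S k) \<and>
                              w = (\<Sum>k\<in>{k. f k \<noteq> 0}. f k))"

definition comp :: "('i \<Rightarrow> 'a::cvs set) \<Rightarrow> 'i \<Rightarrow> 'a \<Rightarrow> 'a" where
  "comp S i w = (THE u. \<exists>f. finite {k. f k \<noteq> 0} \<and> (\<forall>k. f k \<in> S k) \<and>
                           w = (\<Sum>k\<in>{k. f k \<noteq> 0}. f k) \<and> u = f i)"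

text \<open>A vertex operator (on V or on a module) is given by its modes:
  Y v n = v_n, i.e. Y(v,x) = sum_n v_n x^(-n-1).  L(n) = omega_(n+1).\<close>

definition Vgr :: "('v::cvs \<Rightarrow> int \<Rightarrow> 'v \<Rightarrow> 'v) \<Rightarrow> 'v \<Rightarrow> int \<Rightarrow> 'v set" where
  "Vgr Y om n = {v. Y om 1 v = of_int n *\<^sub>C v}"

definition Wgen :: "'w::cvs set \<Rightarrow> ('v \<Rightarrow> int \<Rightarrow> 'w \<Rightarrow> 'w) \<Rightarrow> 'v \<Rightarrow> complex \<Rightarrow> 'w set" where
  "Wgen M Y om n = {w\<in>M. \<exists>k. ((\<lambda>x. Y om 1 x - n *\<^sub>C x) ^^ k) w = 0}"

text \<open>The Jacobi identity, in its equivalent component form (Borcherds identity):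
  for all m n r,
  sum_(i>=0) (m choose i) (u_(r+i) v)_(m+n-i) w
   = sum_(i>=0) (-1)^i (r choose i) (u_(m+r-i) v_(n+i) w - (-1)^r v_(n+r-i) u_(m+i) w),
  where both sums are finite; any N beyond which all summands vanish computes them.\<close>
definition jacobi :: "('v::cvs \<Rightarrow> int \<Rightarrow> 'v \<Rightarrow> 'v) \<Rightarrow> 'w::cvs set \<Rightarrow> ('v \<Rightarrow> int \<Rightarrow> 'w \<Rightarrow> 'w) \<Rightarrow> bool" where
  "jacobi YV M YW \<longleftrightarrow> (\<forall>u v. \<forall>w\<in>M. \<forall>m n r :: int. \<forall>N :: nat.
     (\<forall>i\<ge>N. YV u (r + int i) v = 0 \<and> YW v (n + int i) w = 0 \<and> YW u (m + int i) w = 0) \<longrightarrow>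
     (\<Sum>i<N. (of_int m gchoose i) *\<^sub>C YW (YV u (r + int i) v) (m + n - int i) w)
     = (\<Sum>i<N. ((-1) ^ i * (of_int r gchoose i)) *\<^sub>C
          (YW u (m + r - int i) (YW v (n + int i) w)
           - ((-1) powi r) *\<^sub>C YW v (n + r - int i) (YW u (m + int i) w))))"

text \<open>Vertex operator algebra (V, Y, 1, omega) of central charge c (Lepowsky-Li / FHL):
  V the whole type.\<close>
definition VOA :: "('v::cvs \<Rightarrow> int \<Rightarrow> 'v \<Rightarrow> 'v) \<Rightarrow> 'v \<Rightarrow> 'v \<Rightarrow> complex \<Rightarrow> bool" where
  "VOA Y vac om c \<longleftrightarrow>
     (\<forall>n v. clinear_on UNIV (\<lambda>u. Y u n v)) \<and> (\<forall>u n. clinear_on UNIV (Y u n)) \<and>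
     (\<forall>u v. \<exists>N. \<forall>n\<ge>N. Y u n v = 0) \<and>
     dsum_decomp UNIV (Vgr Y om) \<and> (\<forall>n. fin_dim (Vgr Y om n)) \<and>
     (\<exists>N. \<forall>n<N. Vgr Y om n = {0}) \<and>
     (\<forall>n v. Y vac n v = (if n = -1 then v else 0)) \<and>
     (\<forall>v. (\<forall>n\<ge>0. Y v n vac = 0) \<and> Y v (-1) vac = v) \<and>
     jacobi Y UNIV Y \<and>
     (\<forall>m n :: int. \<forall>v. Y om (m + 1) (Y om (n + 1) v) - Y om (n + 1) (Y om (m + 1) v)
        = of_int (m - n) *\<^sub>C Y om (m + n + 1) v
          + (if m + n = 0 then (of_int (m ^ 3 - m) / 12 * c) *\<^sub>C v else 0)) \<and>
     (\<forall>v n. Y (Y om 0 v) n = (\<lambda>x. (- of_int n) *\<^sub>C Y v (n - 1) x))"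

definition gen_module ::
  "('v::cvs \<Rightarrow> int \<Rightarrow> 'v \<Rightarrow> 'v) \<Rightarrow> 'v \<Rightarrow> 'v \<Rightarrow> 'w::cvs set \<Rightarrow> ('v \<Rightarrow> int \<Rightarrow> 'w \<Rightarrow> 'w) \<Rightarrow> bool" where
  "gen_module YV vac om M YW \<longleftrightarrow>
     csubspace M \<and> (\<forall>v n. \<forall>w\<in>M. YW v n w \<in> M) \<and>
     (\<forall>n. \<forall>w\<in>M. clinear_on UNIV (\<lambda>v. YW v n w)) \<and> (\<forall>v n. clinear_on M (YW v n)) \<and>
     (\<forall>v. \<forall>w\<in>M. \<exists>N. \<forall>n\<ge>N. YW v n w = 0) \<and>
     (\<forall>n. \<forall>w\<in>M. YW vac n w = (if n = -1 then w else 0)) \<and>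
     jacobi YV M YW \<and>
     dsum_decomp M (Wgen M YW om) \<and> (\<forall>n. fin_dim (Wgen M YW om n)) \<and>
     (\<forall>n. \<exists>K. \<forall>k<K. Wgen M YW om (n + of_int k) = {0})"

definition ord_module ::
  "('v::cvs \<Rightarrow> int \<Rightarrow> 'v \<Rightarrow> 'v) \<Rightarrow> 'v \<Rightarrow> 'v \<Rightarrow> 'w::cvs set \<Rightarrow> ('v \<Rightarrow> int \<Rightarrow> 'w \<Rightarrow> 'w) \<Rightarrow> bool" where
  "ord_module YV vac om M YW \<longleftrightarrow> gen_module YV vac om M YW \<and>
     (\<forall>n. \<forall>w\<in>Wgen M YW om n. YW om 1 w = n *\<^sub>C w)"

text \<open>Elements of the completion overline W = prod_n W_[n] are families f with f n in W_[n].
  Action of v_m on overline W, componentwise.\<close>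
definition bar_act :: "'w::cvs set \<Rightarrow> ('v \<Rightarrow> int \<Rightarrow> 'w \<Rightarrow> 'w) \<Rightarrow> 'v \<Rightarrow> 'v \<Rightarrow> int
    \<Rightarrow> (complex \<Rightarrow> 'w) \<Rightarrow> (complex \<Rightarrow> 'w)" where
  "bar_act M YW om v m f = (\<lambda>k. \<Sum>n\<in>{n. comp (Wgen M YW om) k (YW v m (f n)) \<noteq> 0}.
                                    comp (Wgen M YW om) k (YW v m (f n)))"

text \<open>Contragredient W' = coprod_n W_[n]^*: linear functionals on M (extended by 0
  outside M) vanishing on all but finitely many W_[n].\<close>
definition contra :: "'w::cvs set \<Rightarrow> ('v \<Rightarrow> int \<Rightarrow> 'w \<Rightarrow> 'w) \<Rightarrow> 'v \<Rightarrow> ('w \<Rightarrow> complex) set" where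
  "contra M YW om = {\<alpha>. clinear_on M \<alpha> \<and> (\<forall>w. w \<notin> M \<longrightarrow> \<alpha> w = 0) \<and>
                       finite {n. \<exists>w\<in>Wgen M YW om n. \<alpha> w \<noteq> 0}}"

definition pair :: "('w::cvs \<Rightarrow> complex) \<Rightarrow> (complex \<Rightarrow> 'w) \<Rightarrow> complex" where
  "pair \<alpha> f = (\<Sum>n\<in>{n. \<alpha> (f n) \<noteq> 0}. \<alpha> (f n))"

text \<open>Action Y' on the contragredient: the coefficient of x^(-n-1) in
  <Y'(v,x) alpha, w> = <alpha, Y(e^(x L(1)) (-x^(-2))^L(0) v, x^(-1)) w>.
  For v in V_(h):  e^(xL(1))(-x^(-2))^L(0) v = (-1)^h sum_j x^(j-2h) L(1)^j v / j!.\<close>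
definition contra_act :: "('v::cvs \<Rightarrow> int \<Rightarrow> 'v \<Rightarrow> 'v) \<Rightarrow> 'v \<Rightarrow> 'w::cvs set
    \<Rightarrow> ('v \<Rightarrow> int \<Rightarrow> 'w \<Rightarrow> 'w) \<Rightarrow> 'v \<Rightarrow> int \<Rightarrow> ('w \<Rightarrow> complex) \<Rightarrow> ('w \<Rightarrow> complex)" where
  "contra_act YV om M YW v n \<alpha> = (\<lambda>w. if w \<in> M then
     (\<Sum>h\<in>{h. comp (Vgr YV om) h v \<noteq> 0}.
        \<Sum>j\<in>{j. (YV om 2 ^^ j) (comp (Vgr YV om) h v) \<noteq> 0}.
          ((-1) powi h / of_nat (fact j)) *
          \<alpha> (YW ((YV om 2 ^^ j) (comp (Vgr YV om) h v)) (2 * h - int j - n - 2) w))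
     else 0)"

text \<open>Quasi-P(z)-intertwining map of type (W3; W1 W2), F : W1 (x) W2 -> overline W3, given as
  a bilinear map.  Component form of
  Y3(v,x1) F(w1 (x) w2) - F(w1 (x) Y2(v,x1) w2)
    = Res_x0 z^(-1) delta((x1-x0)/z) F(Y1(v,x0) w1 (x) w2):
  coefficient of x1^(-n-1).\<close>
definition quasi_intw :: "('v::cvs \<Rightarrow> int \<Rightarrow> 'v \<Rightarrow> 'v) \<Rightarrow> 'v \<Rightarrow> complex
    \<Rightarrow> ('v \<Rightarrow> int \<Rightarrow> 'a::cvs \<Rightarrow> 'a) \<Rightarrow> ('v \<Rightarrow> int \<Rightarrow> 'b::cvs \<Rightarrow> 'b) \<Rightarrow> ('v \<Rightarrow> int \<Rightarrow> 'c::cvs \<Rightarrow> 'c)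
    \<Rightarrow> ('a \<Rightarrow> 'b \<Rightarrow> complex \<Rightarrow> 'c) \<Rightarrow> bool" where
  "quasi_intw YV om z Y1 Y2 Y3 F \<longleftrightarrow>
     (\<forall>w2 k. clinear_on UNIV (\<lambda>w1. F w1 w2 k)) \<and> (\<forall>w1 k. clinear_on UNIV (\<lambda>w2. F w1 w2 k)) \<and>
     (\<forall>w1 w2 k. F w1 w2 k \<in> Wgen UNIV Y3 om k) \<and>
     (\<forall>v w1 w2. \<forall>n::int. \<forall>N::nat. (\<forall>m\<ge>N. Y1 v (int m) w1 = 0) \<longrightarrow>
        (\<lambda>k. bar_act UNIV Y3 om v n (F w1 w2) k - F w1 (Y2 v n w2) k)
        = (\<lambda>k. \<Sum>m<N. (((of_int (int m - n - 1) gchoose m) * (-1) ^ m * z powi (n - int m))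
                         *\<^sub>C F (Y1 v (int m) w1) w2 k)))"

definition Fvee :: "('a \<Rightarrow> 'b \<Rightarrow> complex \<Rightarrow> 'c::cvs) \<Rightarrow> ('c \<Rightarrow> complex) \<Rightarrow> ('a \<Rightarrow> 'b \<Rightarrow> complex)" where
  "Fvee F \<alpha> = (\<lambda>w1 w2. pair \<alpha> (F w1 w2))"

text \<open>tau_P(z)(v (x) t^n) on (W1 (x) W2)^* (functionals given as bilinear forms):
  coefficient of x1^(-n-1) in the defining formula, for v decomposed into its
  homogeneous components v in V_(h) and
  e^(x1 L(1))(-x1^(-2))^L(0) v = (-1)^h sum_j x1^(j-2h) L(1)^j v / j!.\<close>
definition tau :: "('v::cvs \<Rightarrow> int \<Rightarrow> 'v \<Rightarrow> 'v) \<Rightarrow> 'v \<Rightarrow> complex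
    \<Rightarrow> ('v \<Rightarrow> int \<Rightarrow> 'a::cvs \<Rightarrow> 'a) \<Rightarrow> ('v \<Rightarrow> int \<Rightarrow> 'b::cvs \<Rightarrow> 'b)
    \<Rightarrow> 'v \<Rightarrow> int \<Rightarrow> ('a \<Rightarrow> 'b \<Rightarrow> complex) \<Rightarrow> ('a \<Rightarrow> 'b \<Rightarrow> complex)" where
  "tau YV om z Y1 Y2 v n lam = (\<lambda>w1 w2.
     \<Sum>h\<in>{h. comp (Vgr YV om) h v \<noteq> 0}.
       \<Sum>j\<in>{j. (YV om 2 ^^ j) (comp (Vgr YV om) h v) \<noteq> 0}.
         (let u = (YV om 2 ^^ j) (comp (Vgr YV om) h v) in
          ((-1) powi h / of_nat (fact j)) *
          ((\<Sum>m\<in>{m::nat. Y1 u (int m) w1 \<noteq> 0}.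
              (of_int (int m + int j - 2 * h + n + 1) gchoose m) * (-1) ^ m
              * z powi (2 * h - int j - int m - n - 2) * lam (Y1 u (int m) w1) w2)
           + lam w1 (Y2 u (2 * h - int j - n - 2) w2))))"

end

theory Submission
  imports Defs "HOL-Computational_Algebra.Polynomial_Factorial" "HOL-Computational_Algebra.Field_as_Ring"
begin

text \<open>For homogeneous v, the component form of the quasi-intertwining identity writes
  v_n F(w1 \<otimes> w2)_k as F(w1 \<otimes> v_n w2) plus a finite combination of F(v_m w1 \<otimes> w2),
  all taken at the weight k + wt v - n - 1. Hence W is stable under all modes; being spanned by
  L(0)-homogeneous vectors it is a graded submodule.
  Pairing the same identity with \<alpha> in W3' gives
  \<tau>_P(z)(v \<otimes> t^n) F^\<or>(\<alpha>) = F^\<or>(Y'(v, n) \<alpha>).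
  For v = \<omega>, n = 1 it shows that the kernel of F^\<or> is stable under \<alpha> \<mapsto> \<alpha> \<circ> p(L(0))
  for every polynomial p. If F^\<or>(\<alpha>) = 0, choosing p \<equiv> 1 modulo (x - k)^e and \<equiv> 0 modulo the
  other factors belonging to the finitely many weights seen by \<alpha> isolates the term
  \<alpha>(F(w1 \<otimes> w2)_k), which therefore vanishes; so the kernel of F^\<or> is W^\<bottom>, which is also
  the kernel of restriction W3' \<rightarrow> W'. Restriction is onto, since functionals on W extend to W3.
  Thus F^\<or>(\<alpha>) \<mapsto> \<alpha>|_W is a well-defined bijection, and it is linear and intertwines the two
  actions.\<close>

lemma sum_nonzero_eq:
  fixes f :: "'i \<Rightarrow> 'a::comm_monoid_add"
  assumes "finite A" "{k. f k \<noteq> 0} \<subseteq> A"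
  shows "(\<Sum>k\<in>{k. f k \<noteq> 0}. f k) = sum f A"
  using assms by (intro sum.mono_neutral_left) (auto intro: finite_subset)

lemma sum_lessThan_truncate:
  fixes g :: "nat \<Rightarrow> 'a::comm_monoid_add"
  shows "n \<le> N \<Longrightarrow> (\<And>i. n \<le> i \<Longrightarrow> g i = 0) \<Longrightarrow> (\<Sum>i<N. g i) = (\<Sum>i<n. g i)"
  by (rule sum.mono_neutral_right) auto

lemma truncation_from_int:
  "\<exists>N::int. \<forall>n\<ge>N. f n = 0 \<Longrightarrow> \<exists>N::nat. \<forall>i\<ge>N. f (a + int i) = 0"
proof -
  assume "\<exists>N::int. \<forall>n\<ge>N. f n = 0"
  then obtain N :: int where "\<forall>n\<ge>N. f n = 0" by blast
  then show ?thesis by (intro exI[of _ "nat (N - a)"]) auto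
qed

lemma bij_betw_same_fibres:
  assumes "\<And>a b. a \<in> C \<Longrightarrow> b \<in> C \<Longrightarrow> f a = f b \<longleftrightarrow> g a = g b"
  obtains \<phi> where "bij_betw \<phi> (f ` C) (g ` C)" and "\<And>a. a \<in> C \<Longrightarrow> \<phi> (f a) = g a"
proof
  define \<phi> where "\<phi> y = g (inv_into C f y)" for y
  show \<phi>: "\<phi> (f a) = g a" if "a \<in> C" for a
  proof -
    have "inv_into C f (f a) \<in> C" "f (inv_into C f (f a)) = f a"
      using that by (simp_all add: inv_into_into f_inv_into_f)
    then show ?thesis using assms[of "inv_into C f (f a)" a] that by (simp add: \<phi>_def)
  qed
  show "bij_betw \<phi> (f ` C) (g ` C)"
    unfolding bij_betw_def inj_on_def using \<phi> assms by (auto simp: image_iff)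
qed

lemma funpow_intertwine: "(\<And>y. S (Q y) = Q (R y)) \<Longrightarrow> (S ^^ k) (Q x) = Q ((R ^^ k) x)"
  by (induction k) simp_all

interpretation cv: vector_space "cscale :: complex \<Rightarrow> 'a::cvs \<Rightarrow> 'a"
  by (rule cvs_vector_space)

abbreviation clinear :: "('a::cvs \<Rightarrow> 'b::cvs) \<Rightarrow> bool" where
  "clinear f \<equiv> clinear_on UNIV f"

lemma cscale_complex [simp]: "a *\<^sub>C (x::complex) = a * x"
  by (simp add: cscale_complex_def)

lemma clinear_iff:
  "clinear f \<longleftrightarrow> (\<forall>x y. f (x + y) = f x + f y) \<and> (\<forall>a x. f (a *\<^sub>C x) = a *\<^sub>C f x)"
  by (simp add: clinear_on_def)

lemma clinear_add: "clinear f \<Longrightarrow> f (x + y) = f x + f y"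
  by (simp add: clinear_on_def)

lemma clinear_scale: "clinear f \<Longrightarrow> f (a *\<^sub>C x) = a *\<^sub>C f x"
  by (simp add: clinear_on_def)

lemma clinear_zero: "clinear f \<Longrightarrow> f 0 = 0"
  using clinear_scale[of f 0 0] by simp

lemma clinear_diff: "clinear f \<Longrightarrow> f (x - y) = f x - f y"
  using clinear_add[of f "x - y" y] by (simp add: eq_diff_eq)

lemma clinear_sum:
  assumes f: "clinear f"
  shows "f (sum g A) = (\<Sum>i\<in>A. f (g i))"
  by (induction A rule: infinite_finite_induct) (auto simp: clinear_zero[OF f] clinear_add[OF f])

lemma clinear_compose: "clinear f \<Longrightarrow> clinear g \<Longrightarrow> clinear (\<lambda>x. f (g x))"
  by (simp add: clinear_iff)

lemma clinear_functional_sum: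
  assumes f: "\<And>i. i \<in> A \<Longrightarrow> clinear (f i)"
  shows "clinear (\<lambda>w. \<Sum>i\<in>A. f i w :: complex)"
  unfolding clinear_iff
proof (intro conjI allI)
  fix x y
  have "(\<Sum>i\<in>A. f i (x + y)) = (\<Sum>i\<in>A. f i x + f i y)"
    by (rule sum.cong) (simp_all add: clinear_add[OF f])
  then show "(\<Sum>i\<in>A. f i (x + y)) = (\<Sum>i\<in>A. f i x) + (\<Sum>i\<in>A. f i y)"
    by (simp add: sum.distrib)
next
  fix a x
  have "(\<Sum>i\<in>A. f i (a *\<^sub>C x)) = (\<Sum>i\<in>A. a * f i x)"
    by (rule sum.cong) (simp_all add: clinear_scale[OF f])
  then show "(\<Sum>i\<in>A. f i (a *\<^sub>C x)) = a *\<^sub>C (\<Sum>i\<in>A. f i x)"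
    by (simp add: sum_distrib_left)
qed

lemma clinear_cmult:
  assumes f: "clinear f"
  shows "clinear (\<lambda>w. a * f w :: complex)"
  by (simp add: clinear_iff clinear_add[OF f] clinear_scale[OF f] distrib_left mult.left_commute)

lemma clinear_on_zero:
  "csubspace M \<Longrightarrow> clinear_on M f \<Longrightarrow> f 0 = 0"
  unfolding clinear_on_def using cv.subspace_0 by (metis add_cancel_left_left)

lemma clinear_on_sum:
  assumes M: "csubspace M" and f: "clinear_on M f" and g: "\<And>i. i \<in> A \<Longrightarrow> g i \<in> M"
  shows "f (sum g A) = (\<Sum>i\<in>A. f (g i))"
  using g
proof (induction A rule: infinite_finite_induct)
  case (insert i A)
  then have "g i \<in> M" "sum g A \<in> M" by (auto intro: cv.subspace_sum[OF M])
  then show ?case using insert f by (simp add: clinear_on_def)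
qed (use clinear_on_zero[OF M f] in auto)

lemma clinear_on_extend:
  assumes M: "csubspace M" and f: "clinear_on M (f :: 'a::cvs \<Rightarrow> complex)"
  obtains g where "clinear g" and "\<And>x. x \<in> M \<Longrightarrow> g x = f x"
proof -
  obtain B where B: "B \<subseteq> M" "cv.independent B" "M \<subseteq> cv.span B"
    by (rule cv.maximal_independent_subset)
  interpret P: vector_space_pair "cscale :: complex \<Rightarrow> 'a \<Rightarrow> 'a" "cscale :: complex \<Rightarrow> complex \<Rightarrow> complex"
    by (intro vector_space_pair.intro cvs_vector_space)
  define g where "g = P.construct B f"
  have "Vector_Spaces.linear (cscale :: complex \<Rightarrow> 'a \<Rightarrow> 'a) (cscale :: complex \<Rightarrow> complex \<Rightarrow> complex) g"
    unfolding g_def by (rule P.linear_construct[OF B(2)])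
  then have g: "clinear g"
    unfolding Vector_Spaces.linear_iff clinear_iff by simp
  have "x \<in> M \<and> g x = f x" if "x \<in> cv.span B" for x
    using that
  proof (induction rule: cv.span_induct_alt)
    case base
    then show ?case using cv.subspace_0[OF M] clinear_on_zero[OF M f] clinear_zero[OF g] by simp
  next
    case (step a b y)
    have b: "b \<in> M" "g b = f b"
      using step.hyps B(1) P.construct_basis[OF B(2) step.hyps] by (auto simp: g_def)
    then have "a *\<^sub>C b \<in> M" "f (a *\<^sub>C b + y) = a *\<^sub>C f b + f y"
      using f step.IH cv.subspace_scale[OF M] unfolding clinear_on_def by auto
    then show ?case
      using b step.IH cv.subspace_add[OF M] by (simp add: clinear_add[OF g] clinear_scale[OF g])
  qed
  with g B(3) that show ?thesis by blast
qed

section \<open>Polynomials in a linear operator\<close>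

definition poly_op :: "('a::cvs \<Rightarrow> 'a) \<Rightarrow> complex poly \<Rightarrow> 'a \<Rightarrow> 'a" where
  "poly_op T p x = (\<Sum>i\<le>degree p. coeff p i *\<^sub>C (T ^^ i) x)"

lemma poly_op_bound: "degree p < n \<Longrightarrow> poly_op T p x = (\<Sum>i<n. coeff p i *\<^sub>C (T ^^ i) x)"
  unfolding poly_op_def by (rule sum.mono_neutral_left) (auto simp: coeff_eq_0)

lemma poly_op_0 [simp]: "poly_op T 0 x = 0"
  by (simp add: poly_op_def)

lemma poly_op_pCons:
  assumes T: "clinear T"
  shows "poly_op T (pCons a p) x = a *\<^sub>C x + T (poly_op T p x)"
proof -
  have "poly_op T (pCons a p) x = (\<Sum>i<Suc (Suc (degree p)). coeff (pCons a p) i *\<^sub>C (T ^^ i) x)"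
    using degree_pCons_le[of a p] by (intro poly_op_bound) simp
  also have "\<dots> = a *\<^sub>C x + (\<Sum>i<Suc (degree p). coeff p i *\<^sub>C T ((T ^^ i) x))"
    by (subst sum.lessThan_Suc_shift) simp
  also have "(\<Sum>i<Suc (degree p). coeff p i *\<^sub>C T ((T ^^ i) x)) = T (poly_op T p x)"
    by (simp add: poly_op_def lessThan_Suc_atMost clinear_sum[OF T] clinear_scale[OF T])
  finally show ?thesis .
qed

lemma clinear_poly_op:
  assumes T: "clinear T"
  shows "clinear (poly_op T p)"
proof (induction p)
  case (pCons a p)
  then show ?case
    by (simp add: clinear_iff poly_op_pCons[OF T] clinear_add[OF T] clinear_scale[OF T]
        cv.scale_right_distrib mult.commute)
qed (simp add: clinear_iff)

lemma poly_op_add: "poly_op T (p + q) x = poly_op T p x + poly_op T q x"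
proof -
  define n where "n = Suc (max (degree p) (degree q))"
  have "degree (p + q) < n" "degree p < n" "degree q < n"
    using degree_add_le_max[of p q] by (simp_all add: n_def)
  then show ?thesis
    by (simp add: poly_op_bound[of _ n] cv.scale_left_distrib sum.distrib)
qed

lemma poly_op_smult: "poly_op T (smult a p) x = a *\<^sub>C poly_op T p x"
proof -
  have "poly_op T (smult a p) x = (\<Sum>i<Suc (degree p). coeff (smult a p) i *\<^sub>C (T ^^ i) x)"
    using degree_smult_le[of a p] by (intro poly_op_bound) simp
  also have "\<dots> = a *\<^sub>C poly_op T p x"
    unfolding poly_op_def lessThan_Suc_atMost by (simp add: cv.scale_sum_right)
  finally show ?thesis .
qed

lemma poly_op_mult:
  assumes T: "clinear T"
  shows "poly_op T (p * q) x = poly_op T p (poly_op T q x)"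
proof (induction p)
  case (pCons a p)
  have "poly_op T (pCons a p * q) x = poly_op T (smult a q) x + poly_op T (pCons 0 (p * q)) x"
    by (simp add: poly_op_add)
  also have "\<dots> = poly_op T (pCons a p) (poly_op T q x)"
    by (simp add: poly_op_smult poly_op_pCons[OF T] pCons.IH)
  finally show ?case .
qed simp

lemma poly_op_1:
  assumes T: "clinear T"
  shows "poly_op T 1 x = x"
  using poly_op_pCons[OF T, of 1 0 x] by (simp add: one_pCons clinear_zero[OF T])

lemma poly_op_commute:
  assumes T: "clinear T"
  shows "poly_op T p (poly_op T q x) = poly_op T q (poly_op T p x)"
  by (metis poly_op_mult[OF T] mult.commute)

lemma poly_op_linear_factor_power:
  assumes T: "clinear T"
  shows "poly_op T ([:-c, 1:] ^ k) x = ((\<lambda>y. T y - c *\<^sub>C y) ^^ k) x"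
proof (induction k)
  case (Suc k)
  have linear_factor: "poly_op T [:-c, 1:] y = T y - c *\<^sub>C y" for y
    using poly_op_pCons[OF T, of "-c" "[:1:]" y] poly_op_1[OF T]
    by (simp add: cv.scale_minus_left flip: one_pCons)
  show ?case
    by (simp only: power_Suc poly_op_mult[OF T] linear_factor Suc.IH funpow.simps(2) o_apply)
qed (simp add: poly_op_1[OF T])

lemma poly_op_annihilates_product:
  assumes T: "clinear T" and S: "finite S" "k \<in> S" and q: "poly_op T (q k) x = 0"
  shows "poly_op T (p * (\<Prod>i\<in>S. q i)) x = 0"
proof -
  have "p * (\<Prod>i\<in>S. q i) = (p * (\<Prod>i\<in>S - {k}. q i)) * q k"
    using prod.remove[OF S, of q] by (simp add: ac_simps)
  then show ?thesis
    by (simp only: poly_op_mult[OF T] q clinear_zero[OF clinear_poly_op[OF T]])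
qed

section \<open>Generalized eigenspaces\<close>

definition gen_eigenspace :: "('a::cvs \<Rightarrow> 'a) \<Rightarrow> complex \<Rightarrow> 'a set" where
  "gen_eigenspace T c = {x. \<exists>k. ((\<lambda>y. T y - c *\<^sub>C y) ^^ k) x = 0}"

lemma gen_eigenspace_iff_poly_op:
  "clinear T \<Longrightarrow> x \<in> gen_eigenspace T c \<longleftrightarrow> (\<exists>k. poly_op T ([:-c, 1:] ^ k) x = 0)"
  by (simp add: gen_eigenspace_def poly_op_linear_factor_power)

lemma poly_op_gen_eigenspace:
  assumes T: "clinear T" and x: "x \<in> gen_eigenspace T c"
  shows "poly_op T p x \<in> gen_eigenspace T c"
proof -
  obtain k where "poly_op T ([:-c, 1:] ^ k) x = 0"
    using x gen_eigenspace_iff_poly_op[OF T] by blast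
  then have "poly_op T ([:-c, 1:] ^ k) (poly_op T p x) = 0"
    by (simp add: poly_op_commute[OF T, of _ p] clinear_zero[OF clinear_poly_op[OF T]])
  then show ?thesis using gen_eigenspace_iff_poly_op[OF T] by blast
qed

lemma gen_eigenspace_closed:
  assumes T: "clinear T" and x: "x \<in> gen_eigenspace T c"
  shows "T x \<in> gen_eigenspace T c"
  using poly_op_gen_eigenspace[OF T x, of "[:0, 1:]"] poly_op_pCons[OF T, of 0 "[:1:]" x] poly_op_1[OF T]
  by (simp flip: one_pCons)

lemma csubspace_gen_eigenspace:
  assumes T: "clinear T"
  shows "csubspace (gen_eigenspace T c)"
  unfolding cv.subspace_def
proof (intro conjI ballI allI)
  let ?q = "\<lambda>k. [:-c, 1:] ^ k"
  show "0 \<in> gen_eigenspace T c"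
    by (simp add: gen_eigenspace_def exI[of _ 0])
  fix x y assume "x \<in> gen_eigenspace T c" "y \<in> gen_eigenspace T c"
  then obtain a b where "poly_op T (?q a) x = 0" "poly_op T (?q b) y = 0"
    using gen_eigenspace_iff_poly_op[OF T] by blast
  then have "poly_op T (?q b * ?q a) x = 0" "poly_op T (?q a * ?q b) y = 0"
    by (simp_all add: poly_op_mult[OF T] clinear_zero[OF clinear_poly_op[OF T]])
  then have "poly_op T (?q (a + b)) (x + y) = 0"
    by (simp add: power_add ac_simps clinear_add[OF clinear_poly_op[OF T]])
  then show "x + y \<in> gen_eigenspace T c"
    using gen_eigenspace_iff_poly_op[OF T] by blast
next
  fix a x assume "x \<in> gen_eigenspace T c"
  then show "a *\<^sub>C x \<in> gen_eigenspace T c"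
    using poly_op_gen_eigenspace[OF T, of x c "[:a:]"] poly_op_smult[of T a 1] poly_op_1[OF T]
    by (simp flip: one_pCons)
qed

lemma eigenvector_in_gen_eigenspace: "T x = c *\<^sub>C x \<Longrightarrow> x \<in> gen_eigenspace T c"
  unfolding gen_eigenspace_def by (auto intro!: exI[of _ 1])

lemma coprime_linear_factors: "(a::complex) \<noteq> b \<Longrightarrow> coprime [:-a, 1:] [:-b, 1:]"
proof (rule coprimeI)
  fix d assume "a \<noteq> b" "d dvd [:-a, 1:]" "d dvd [:-b, 1:]"
  then have "d dvd [:a - b:]" and "is_unit [:a - b:]"
    using dvd_diff[of d "[:-b, 1:]" "[:-a, 1:]"] by (simp_all add: is_unit_const_poly_iff dvd_field_iff)
  then show "is_unit d" by (rule dvd_unit_imp_unit)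
qed

text \<open>Chinese remainder theorem: p is 1 modulo the annihilator of x k0 and 0 modulo those
  of the other x k.\<close>
lemma gen_eigenspace_projection:
  assumes T: "clinear T" and S: "finite S" "k0 \<in> S" and g: "inj_on g S"
    and x: "\<And>k. k \<in> S \<Longrightarrow> x k \<in> gen_eigenspace T (g k)"
  obtains p where "poly_op T p (x k0) = x k0" and "\<And>k. k \<in> S - {k0} \<Longrightarrow> poly_op T p (x k) = 0"
proof -
  have "\<forall>k\<in>S. \<exists>e. poly_op T ([:-g k, 1:] ^ e) (x k) = 0"
    using x by (simp add: gen_eigenspace_iff_poly_op[OF T])
  from bchoice[OF this] obtain e where e: "\<forall>k\<in>S. poly_op T ([:-g k, 1:] ^ e k) (x k) = 0"
    by blast
  define q where "q k = [:-g k, 1:] ^ e k" for k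
  define r where "r = (\<Prod>k\<in>S - {k0}. q k)"
  have "coprime (q k0) (q k)" if "k \<in> S - {k0}" for k
  proof -
    have "g k0 \<noteq> g k" using that S(2) g by (auto simp: inj_on_def)
    then show ?thesis by (simp add: q_def coprime_linear_factors)
  qed
  then have "coprime (q k0) r"
    unfolding r_def by (rule prod_coprime_right)
  then obtain a b where bezout: "a * q k0 + b * r = 1"
    using bezout_coefficients_fst_snd[of "q k0" r] by auto
  show ?thesis
  proof
    have "poly_op T (a * q k0) (x k0) = 0"
      using e S(2) by (simp add: q_def poly_op_mult[OF T] clinear_zero[OF clinear_poly_op[OF T]])
    then show "poly_op T (b * r) (x k0) = x k0"
      using arg_cong[OF bezout, of "\<lambda>p. poly_op T p (x k0)"] by (simp add: poly_op_add poly_op_1[OF T])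
  next
    fix k assume k: "k \<in> S - {k0}"
    have "poly_op T (q k) (x k) = 0" using e k by (simp add: q_def)
    then show "poly_op T (b * r) (x k) = 0"
      unfolding r_def by (rule poly_op_annihilates_product[OF T finite_Diff[OF S(1)] k])
  qed
qed

lemma gen_eigenspaces_independent:
  assumes T: "clinear T" and S: "finite S" "k0 \<in> S" and g: "inj_on g S"
    and x: "\<And>k. k \<in> S \<Longrightarrow> x k \<in> gen_eigenspace T (g k)" and sum: "(\<Sum>k\<in>S. x k) = 0"
  shows "x k0 = 0"
proof -
  obtain p where p: "poly_op T p (x k0) = x k0" "\<And>k. k \<in> S - {k0} \<Longrightarrow> poly_op T p (x k) = 0"
    using gen_eigenspace_projection[OF T S g x] by blast
  have "x k0 = (\<Sum>k\<in>S. poly_op T p (x k))"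
    using p by (simp add: sum.remove[OF S])
  also have "\<dots> = 0"
    using sum by (simp add: clinear_sum[OF clinear_poly_op[OF T], symmetric] clinear_zero[OF clinear_poly_op[OF T]])
  finally show ?thesis .
qed

locale gen_eigen_decomposition =
  fixes T :: "'a::cvs \<Rightarrow> 'a" and g :: "'i \<Rightarrow> complex" and S :: "'i \<Rightarrow> 'a set"
  assumes clinear_T: "clinear T" and inj_g: "inj g"
    and subspace: "\<And>k. csubspace (S k)"
    and gen_eigenspace: "\<And>k. S k \<subseteq> gen_eigenspace T (g k)"
    and decomposition: "dsum_decomp UNIV S"
begin

lemma comp_eqI:
  assumes fin: "finite {k. f k \<noteq> 0}" and fS: "\<And>k. f k \<in> S k"
    and w: "w = (\<Sum>k\<in>{k. f k \<noteq> 0}. f k)"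
  shows "comp S i w = f i"
  unfolding comp_def
proof (rule the_equality)
  fix u
  assume "\<exists>f'. finite {k. f' k \<noteq> 0} \<and> (\<forall>k. f' k \<in> S k) \<and> w = (\<Sum>k\<in>{k. f' k \<noteq> 0}. f' k) \<and> u = f' i"
  then obtain f' where fin': "finite {k. f' k \<noteq> 0}" and fS': "\<And>k. f' k \<in> S k"
    and w': "w = (\<Sum>k\<in>{k. f' k \<noteq> 0}. f' k)" and u: "u = f' i" by blast
  define A where "A = {k. f k \<noteq> 0} \<union> {k. f' k \<noteq> 0}"
  have A: "finite A" using fin fin' by (simp add: A_def)
  have "(\<Sum>k\<in>A. f k - f' k) = 0"
    using w w' sum_nonzero_eq[OF A, of f] sum_nonzero_eq[OF A, of f'] by (simp add: A_def sum_subtractf)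
  moreover have "f k - f' k \<in> gen_eigenspace T (g k)" for k
    using fS fS' gen_eigenspace cv.subspace_diff[OF subspace] by blast
  ultimately have eq: "f k - f' k = 0" if "k \<in> A" for k
    using gen_eigenspaces_independent[OF clinear_T A that inj_on_subset[OF inj_g subset_UNIV],
        where x = "\<lambda>k. f k - f' k"] by blast
  show "u = f i"
  proof (cases "i \<in> A")
    case True
    then show ?thesis using eq[OF True] u by simp
  qed (use u in \<open>simp add: A_def\<close>)
qed (use assms in blast)

lemma comp_decomposition:
  shows "finite {k. comp S k w \<noteq> 0}" and "comp S k w \<in> S k"
    and "(\<Sum>k\<in>{k. comp S k w \<noteq> 0}. comp S k w) = w"
proof -
  obtain f where f: "finite {k. f k \<noteq> 0}" "\<And>k. f k \<in> S k" "w = (\<Sum>k\<in>{k. f k \<noteq> 0}. f k)"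
    using decomposition unfolding dsum_decomp_def by blast
  have "comp S k w = f k" for k by (rule comp_eqI[OF f])
  then show "finite {k. comp S k w \<noteq> 0}" "comp S k w \<in> S k"
    "(\<Sum>k\<in>{k. comp S k w \<noteq> 0}. comp S k w) = w"
    using f by simp_all
qed

lemma comp_homogeneous:
  assumes x: "x \<in> S c"
  shows "comp S i x = (if i = c then x else 0)"
proof -
  define f where "f k = (if k = c then x else 0)" for k
  have "{k. f k \<noteq> 0} = (if x = 0 then {} else {c})"
    by (auto simp: f_def)
  then have "comp S i x = f i"
    by (intro comp_eqI) (auto simp: f_def x cv.subspace_0[OF subspace])
  then show ?thesis by (simp add: f_def)
qed

lemma comp_linear_combination: "comp S i (a *\<^sub>C x + y) = a *\<^sub>C comp S i x + comp S i y"
proof -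
  define f where "f k = a *\<^sub>C comp S k x + comp S k y" for k
  define U where "U = {k. comp S k x \<noteq> 0} \<union> {k. comp S k y \<noteq> 0}"
  have U: "finite U" "{k. f k \<noteq> 0} \<subseteq> U"
    using comp_decomposition(1) by (auto simp: U_def f_def)
  have "(\<Sum>k\<in>{k. f k \<noteq> 0}. f k) = (\<Sum>k\<in>U. f k)"
    by (rule sum_nonzero_eq[OF U])
  also have "\<dots> = a *\<^sub>C (\<Sum>k\<in>U. comp S k x) + (\<Sum>k\<in>U. comp S k y)"
    by (simp add: f_def sum.distrib cv.scale_sum_right)
  also have "\<dots> = a *\<^sub>C x + y"
    using sum_nonzero_eq[OF U(1), of "\<lambda>k. comp S k x"] sum_nonzero_eq[OF U(1), of "\<lambda>k. comp S k y"]
    by (simp add: U_def comp_decomposition(3))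
  finally have sum: "a *\<^sub>C x + y = (\<Sum>k\<in>{k. f k \<noteq> 0}. f k)" ..
  have "f k \<in> S k" for k
    unfolding f_def using comp_decomposition(2) subspace by (intro cv.subspace_add cv.subspace_scale)
  then have "comp S i (a *\<^sub>C x + y) = f i"
    using finite_subset[OF U(2,1)] sum by (intro comp_eqI)
  then show ?thesis by (simp add: f_def)
qed

lemma clinear_comp: "clinear (comp S i)"
  unfolding clinear_iff
proof (intro conjI allI)
  have "comp S i 0 = 0"
    using comp_homogeneous[OF cv.subspace_0[OF subspace], of i i] by simp
  then show "comp S i (a *\<^sub>C x) = a *\<^sub>C comp S i x" for a x
    using comp_linear_combination[of i a x 0] by simp
  show "comp S i (x + y) = comp S i x + comp S i y" for x y
    using comp_linear_combination[of i 1 x y] by simp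
qed

end

section \<open>Vertex operator algebras and their modules\<close>

lemma jacobi_restrict: "jacobi YV UNIV Y \<Longrightarrow> jacobi YV M Y"
  unfolding jacobi_def Ball_def by fast

definition restrict0 :: "'w set \<Rightarrow> ('w \<Rightarrow> complex) \<Rightarrow> 'w \<Rightarrow> complex" where
  "restrict0 M \<alpha> = (\<lambda>w. if w \<in> M then \<alpha> w else 0)"

lemma restrict0_eq_zero_iff: "restrict0 M \<alpha> = (\<lambda>w. 0) \<longleftrightarrow> (\<forall>w\<in>M. \<alpha> w = 0)"
  by (auto simp: restrict0_def fun_eq_iff)

locale vertex_operator_algebra =
  fixes YV :: "'v::cvs \<Rightarrow> int \<Rightarrow> 'v \<Rightarrow> 'v" and vac om :: 'v and c :: complex
  assumes VOA: "VOA YV vac om c"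
begin

lemma clinear_mode_V: "clinear (YV u n)"
  using VOA by (simp add: VOA_def)

lemma truncation_V: "\<exists>N::nat. \<forall>i\<ge>N. YV u (a + int i) v = 0"
  using VOA by (intro truncation_from_int) (simp add: VOA_def)

lemma creation: "YV v (-1) vac = v"
  using VOA by (simp add: VOA_def)

lemma annihilation: "0 \<le> n \<Longrightarrow> YV v n vac = 0"
  using VOA by (simp add: VOA_def)

lemma virasoro:
  "YV om (m + 1) (YV om (n + 1) v) - YV om (n + 1) (YV om (m + 1) v)
     = of_int (m - n) *\<^sub>C YV om (m + n + 1) v
       + (if m + n = 0 then (of_int (m ^ 3 - m) / 12 * c) *\<^sub>C v else 0)"
  using VOA unfolding VOA_def by blast

lemma L_minus1_vacuum: "YV om 0 v = YV v (-2) vac"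
proof -
  have "YV (YV om 0 v) (-1) vac = YV v (-2) vac"
    using VOA by (simp add: VOA_def)
  then show ?thesis by (simp add: creation)
qed

lemma csubspace_Vgr: "csubspace (Vgr YV om h)"
  unfolding cv.subspace_def Vgr_def
  by (simp add: clinear_zero[OF clinear_mode_V] clinear_add[OF clinear_mode_V]
      clinear_scale[OF clinear_mode_V] cv.scale_right_distrib cv.scale_scale mult.commute)

sublocale V: gen_eigen_decomposition "YV om 1" of_int "Vgr YV om"
proof
  show "Vgr YV om k \<subseteq> gen_eigenspace (YV om 1) (of_int k)" for k
    by (auto simp: Vgr_def intro: eigenvector_in_gen_eigenspace)
qed (use VOA csubspace_Vgr in \<open>simp_all add: VOA_def inj_def\<close>)

lemma omega_weight: "om \<in> Vgr YV om 2"
  using virasoro[of 0 "-2" vac] by (simp add: Vgr_def creation annihilation clinear_zero[OF clinear_mode_V])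

lemma L1_lowers_weight:
  assumes v: "v \<in> Vgr YV om h"
  shows "YV om 2 v \<in> Vgr YV om (h - 1)"
proof -
  have "YV om 1 (YV om 2 v) = YV om 2 (YV om 1 v) - YV om 2 v"
    using virasoro[of 0 1 v] by (simp add: cv.scale_minus_left algebra_simps)
  also have "\<dots> = of_int (h - 1) *\<^sub>C YV om 2 v"
    using v by (simp add: Vgr_def clinear_scale[OF clinear_mode_V] cv.scale_left_diff_distrib)
  finally show ?thesis by (simp add: Vgr_def)
qed

lemma L1_power_weight: "v \<in> Vgr YV om h \<Longrightarrow> (YV om 2 ^^ j) v \<in> Vgr YV om (h - int j)"
proof (induction j)
  case (Suc j)
  then show ?case using L1_lowers_weight[of "(YV om 2 ^^ j) v" "h - int j"] by (simp add: algebra_simps)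
qed simp

lemma L1_component_weight:
  "(YV om 2 ^^ j) (comp (Vgr YV om) h v) \<in> Vgr YV om (h - int j)"
  by (rule L1_power_weight[OF V.comp_decomposition(2)])

end

locale voa_module = vertex_operator_algebra +
  fixes Y :: "'v::cvs \<Rightarrow> int \<Rightarrow> 'w::cvs \<Rightarrow> 'w"
  assumes module: "gen_module YV vac om UNIV Y"
begin

abbreviation L0 :: "'w \<Rightarrow> 'w" where
  "L0 \<equiv> Y om 1"

lemma clinear_mode: "clinear (Y v n)"
  using module by (simp add: gen_module_def)

lemma clinear_mode_vertex: "clinear (\<lambda>v. Y v n w)"
  using module by (simp add: gen_module_def)

lemma truncation_int: "\<exists>N. \<forall>n\<ge>N. Y v n w = 0"
  using module by (simp add: gen_module_def)

lemma truncation: "\<exists>N::nat. \<forall>i\<ge>N. Y v (a + int i) w = 0"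
  by (rule truncation_from_int[OF truncation_int])

lemma jacobi_module: "jacobi YV UNIV Y"
  using module by (simp add: gen_module_def)

lemma fin_dim_Wgen: "fin_dim (Wgen UNIV Y om n)"
  using module by (simp add: gen_module_def)

lemma Wgen_vanishes_below: "\<exists>K. \<forall>k<K. Wgen UNIV Y om (n + of_int k) = {0}"
  using module by (simp add: gen_module_def)

lemma vacuum_mode: "Y vac n w = (if n = -1 then w else 0)"
  using module by (simp add: gen_module_def)

lemma borcherds_identity:
  assumes "\<forall>i\<ge>N. YV u (r + int i) v = 0 \<and> Y v (n + int i) w = 0 \<and> Y u (m + int i) w = 0"
  shows "(\<Sum>i<N. (of_int m gchoose i) *\<^sub>C Y (YV u (r + int i) v) (m + n - int i) w)
     = (\<Sum>i<N. ((-1) ^ i * (of_int r gchoose i)) *\<^sub>C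
          (Y u (m + r - int i) (Y v (n + int i) w)
           - ((-1) powi r) *\<^sub>C Y v (n + r - int i) (Y u (m + int i) w)))"
  using jacobi_module assms unfolding jacobi_def by blast

lemma Wgen_UNIV: "Wgen UNIV Y om n = gen_eigenspace L0 n"
  by (simp add: Wgen_def gen_eigenspace_def)

sublocale W: gen_eigen_decomposition L0 "\<lambda>x. x" "Wgen UNIV Y om"
  using module clinear_mode csubspace_gen_eigenspace[OF clinear_mode]
  by unfold_locales (simp_all add: gen_module_def Wgen_UNIV)

lemma mode_L_minus1_vacuum: "Y (YV v (-2) vac) m w = - (of_int m *\<^sub>C Y v (m - 1) w)"
proof -
  obtain N0 where N0: "\<forall>i\<ge>N0. Y v (m + int i) w = 0"
    using truncation by blast
  define N where "N = max 2 N0"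
  have "\<forall>i\<ge>N. YV v (-2 + int i) vac = 0 \<and> Y vac (0 + int i) w = 0 \<and> Y v (m + int i) w = 0"
    using N0 by (auto simp: N_def vacuum_mode intro!: annihilation)
  note borcherds = borcherds_identity[OF this]
  have "(\<Sum>i<N. (of_int m gchoose i) *\<^sub>C Y (YV v (-2 + int i) vac) (m + 0 - int i) w)
      = Y (YV v (-2) vac) m w + of_int m *\<^sub>C Y v (m - 1) w"
    by (subst sum_lessThan_truncate[of 2])
      (auto simp: N_def numeral_2_eq_2 creation annihilation clinear_zero[OF clinear_mode_vertex])
  moreover have "(\<Sum>i<N. ((-1) ^ i * (of_int (-2) gchoose i)) *\<^sub>C
          (Y v (m + -2 - int i) (Y vac (0 + int i) w)
           - ((-1) powi -2) *\<^sub>C Y vac (0 + -2 - int i) (Y v (m + int i) w))) = 0"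
    by (rule sum.neutral) (simp add: vacuum_mode clinear_zero[OF clinear_mode])
  ultimately show ?thesis
    using borcherds by (simp add: eq_neg_iff_add_eq_0)
qed

lemma L0_commutator: "L0 (Y v n w) - Y v n (L0 w) = Y (YV om 0 v) (n + 1) w + Y (YV om 1 v) n w"
proof -
  obtain N1 N2 N3 where trunc: "\<forall>i\<ge>N1. YV om (0 + int i) v = 0" "\<forall>i\<ge>N2. Y v (n + int i) w = 0"
    "\<forall>i\<ge>N3. Y om (1 + int i) w = 0"
    using truncation_V truncation by metis
  define N where "N = max 2 (max N1 (max N2 N3))"
  have "\<forall>i\<ge>N. YV om (0 + int i) v = 0 \<and> Y v (n + int i) w = 0 \<and> Y om (1 + int i) w = 0"
    using trunc by (auto simp: N_def)
  note borcherds = borcherds_identity[OF this]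
  have "(1::complex) gchoose i = 0" if "2 \<le> i" for i
    using binomial_gbinomial[of 1 i, where 'a=complex] that by (simp add: binomial_eq_0)
  then have "(\<Sum>i<N. (of_int 1 gchoose i) *\<^sub>C Y (YV om (0 + int i) v) (1 + n - int i) w)
      = Y (YV om 0 v) (n + 1) w + Y (YV om 1 v) n w"
    by (subst sum_lessThan_truncate[of 2]) (auto simp: N_def numeral_2_eq_2 add.commute)
  moreover have "(\<Sum>i<N. ((-1) ^ i * (of_int 0 gchoose i)) *\<^sub>C
          (Y om (1 + 0 - int i) (Y v (n + int i) w)
           - ((-1) powi 0) *\<^sub>C Y v (n + 0 - int i) (Y om (1 + int i) w)))
       = L0 (Y v n w) - Y v n (L0 w)"
    by (subst sum_lessThan_truncate[of 1]) (auto simp: N_def gbinomial_0_left)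
  ultimately show ?thesis
    using borcherds by simp
qed

lemma L0_commutator_homogeneous:
  assumes v: "v \<in> Vgr YV om h"
  shows "L0 (Y v n w) = Y v n (L0 w) + (of_int h - of_int n - 1) *\<^sub>C Y v n w"
proof -
  have "Y (YV om 1 v) n w = of_int h *\<^sub>C Y v n w"
    using v clinear_scale[OF clinear_mode_vertex] by (simp add: Vgr_def)
  moreover have "Y (YV om 0 v) (n + 1) w = - (of_int (n + 1) *\<^sub>C Y v n w)"
    by (simp add: L_minus1_vacuum mode_L_minus1_vacuum)
  ultimately show ?thesis
    using L0_commutator[of v n w] by (simp add: algebra_simps cv.scale_left_diff_distrib cv.scale_left_distrib)
qed

lemma mode_gen_eigenspace:
  assumes v: "v \<in> Vgr YV om h" and x: "x \<in> gen_eigenspace L0 a"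
  shows "Y v n x \<in> gen_eigenspace L0 (a + of_int (h - n - 1))"
proof -
  let ?b = "a + of_int (h - n - 1)"
  have "L0 (Y v n y) - ?b *\<^sub>C Y v n y = Y v n (L0 y - a *\<^sub>C y)" for y
    using L0_commutator_homogeneous[OF v, of n y]
    by (simp add: clinear_diff[OF clinear_mode] clinear_scale[OF clinear_mode] algebra_simps
        cv.scale_left_diff_distrib cv.scale_left_distrib)
  then have intertwine:
    "((\<lambda>y. L0 y - ?b *\<^sub>C y) ^^ k) (Y v n x) = Y v n (((\<lambda>y. L0 y - a *\<^sub>C y) ^^ k) x)" for k
    by (rule funpow_intertwine)
  obtain k where "((\<lambda>y. L0 y - a *\<^sub>C y) ^^ k) x = 0"
    using x by (auto simp: gen_eigenspace_def)
  then have "((\<lambda>y. L0 y - ?b *\<^sub>C y) ^^ k) (Y v n x) = 0"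
    by (simp only: intertwine clinear_zero[OF clinear_mode])
  then show ?thesis
    unfolding gen_eigenspace_def by blast
qed

lemma bar_act_homogeneous:
  assumes u: "u \<in> Vgr YV om d" and f: "\<And>k. f k \<in> gen_eigenspace L0 k"
  shows "bar_act UNIV Y om u p f k = Y u p (f (k - of_int (d - p - 1)))"
proof -
  define s :: complex where "s = of_int (d - p - 1)"
  have "comp (Wgen UNIV Y om) k (Y u p (f n)) = (if n = k - s then Y u p (f n) else 0)" for n
    using W.comp_homogeneous[of "Y u p (f n)" "n + s" k] mode_gen_eigenspace[OF u f]
    by (auto simp: Wgen_UNIV s_def)
  moreover have "{n. (if n = k - s then Y u p (f n) else 0) \<noteq> 0}
      = (if Y u p (f (k - s)) = 0 then {} else {k - s})"
    by auto
  ultimately show ?thesis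
    by (simp add: bar_act_def s_def)
qed

section \<open>Contragredient modules and graded submodules\<close>

definition wt_supp :: "('w \<Rightarrow> complex) \<Rightarrow> complex set" where
  "wt_supp \<alpha> = {n. \<exists>w\<in>Wgen UNIV Y om n. \<alpha> w \<noteq> 0}"

lemma contra_iff: "\<alpha> \<in> contra UNIV Y om \<longleftrightarrow> clinear \<alpha> \<and> finite (wt_supp \<alpha>)"
  by (simp add: contra_def wt_supp_def)

lemma wt_supp_zero: "w \<in> gen_eigenspace L0 n \<Longrightarrow> n \<notin> wt_supp \<alpha> \<Longrightarrow> \<alpha> w = 0"
  by (auto simp: wt_supp_def Wgen_UNIV)

lemma contra_add:
  assumes "\<alpha> \<in> contra UNIV Y om" "\<beta> \<in> contra UNIV Y om"
  shows "(\<lambda>w. \<alpha> w + \<beta> w) \<in> contra UNIV Y om"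
proof -
  have "wt_supp (\<lambda>w. \<alpha> w + \<beta> w) \<subseteq> wt_supp \<alpha> \<union> wt_supp \<beta>"
    by (auto simp: wt_supp_def)
  with assms show ?thesis
    by (auto simp: contra_iff clinear_iff distrib_left intro: finite_subset)
qed

lemma contra_scale:
  assumes "\<alpha> \<in> contra UNIV Y om"
  shows "(\<lambda>w. a * \<alpha> w) \<in> contra UNIV Y om"
proof -
  have "wt_supp (\<lambda>w. a * \<alpha> w) \<subseteq> wt_supp \<alpha>"
    by (auto simp: wt_supp_def)
  with assms show ?thesis
    by (auto simp: contra_iff clinear_cmult intro: finite_subset)
qed

lemma contra_diff:
  assumes "\<alpha> \<in> contra UNIV Y om" "\<beta> \<in> contra UNIV Y om"
  shows "(\<lambda>w. \<alpha> w - \<beta> w) \<in> contra UNIV Y om"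
  using contra_add[OF assms(1) contra_scale[OF assms(2), of "-1"]] by simp

lemma pair_eq_sum:
  assumes "finite T" "wt_supp \<alpha> \<subseteq> T" "\<And>k. f k \<in> gen_eigenspace L0 k"
  shows "pair \<alpha> f = (\<Sum>n\<in>T. \<alpha> (f n))"
  unfolding pair_def
proof (rule sum.mono_neutral_left)
  show "{n. \<alpha> (f n) \<noteq> 0} \<subseteq> T"
    using assms(2,3) wt_supp_zero by blast
qed (use assms in auto)

text \<open>The weight-h component of v enters Y'(v, n) through modes of index 2h - j - n - 2 of
  L(1)^j v_(h), of weight h - j; each of them shifts weights by n + 1 - h, independently of j.\<close>
definition contra_act_supp :: "'v \<Rightarrow> int \<Rightarrow> ('w \<Rightarrow> complex) \<Rightarrow> complex set" where
  "contra_act_supp v n \<alpha> =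
     (\<Union>h\<in>{h. comp (Vgr YV om) h v \<noteq> 0}. {k. k + of_int (n + 1 - h) \<in> wt_supp \<alpha>})"

lemma finite_contra_act_supp:
  assumes "\<alpha> \<in> contra UNIV Y om"
  shows "finite (contra_act_supp v n \<alpha>)"
proof -
  have "{k. k + s \<in> wt_supp \<alpha>} = (\<lambda>k. k - s) ` wt_supp \<alpha>" for s
    by (force simp: algebra_simps)
  then show ?thesis
    using assms V.comp_decomposition(1) by (simp add: contra_act_supp_def contra_iff)
qed

lemma contra_act_UNIV:
  "contra_act YV om UNIV Y v n \<alpha> w =
     (\<Sum>h\<in>{h. comp (Vgr YV om) h v \<noteq> 0}.
        \<Sum>j\<in>{j. (YV om 2 ^^ j) (comp (Vgr YV om) h v) \<noteq> 0}.
          ((-1) powi h / of_nat (fact j)) *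
          \<alpha> (Y ((YV om 2 ^^ j) (comp (Vgr YV om) h v)) (2 * h - int j - n - 2) w))"
  by (simp add: contra_act_def)

lemma contra_act_in_contra:
  assumes \<alpha>: "\<alpha> \<in> contra UNIV Y om"
  shows "contra_act YV om UNIV Y v n \<alpha> \<in> contra UNIV Y om"
    and "wt_supp (contra_act YV om UNIV Y v n \<alpha>) \<subseteq> contra_act_supp v n \<alpha>"
proof -
  have lin: "clinear \<alpha>" using \<alpha> by (simp add: contra_iff)
  show supp: "wt_supp (contra_act YV om UNIV Y v n \<alpha>) \<subseteq> contra_act_supp v n \<alpha>"
  proof
    fix k assume "k \<in> wt_supp (contra_act YV om UNIV Y v n \<alpha>)"
    then obtain w where w: "w \<in> gen_eigenspace L0 k" "contra_act YV om UNIV Y v n \<alpha> w \<noteq> 0"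
      by (auto simp: wt_supp_def Wgen_UNIV)
    have "contra_act YV om UNIV Y v n \<alpha> w = 0" if
      "\<forall>h\<in>{h. comp (Vgr YV om) h v \<noteq> 0}. \<forall>j.
         \<alpha> (Y ((YV om 2 ^^ j) (comp (Vgr YV om) h v)) (2 * h - int j - n - 2) w) = 0"
      unfolding contra_act_UNIV using that by (intro sum.neutral ballI) simp
    then obtain h j where h: "comp (Vgr YV om) h v \<noteq> 0"
      and "\<alpha> (Y ((YV om 2 ^^ j) (comp (Vgr YV om) h v)) (2 * h - int j - n - 2) w) \<noteq> 0"
      using w(2) by blast
    moreover have "Y ((YV om 2 ^^ j) (comp (Vgr YV om) h v)) (2 * h - int j - n - 2) w
        \<in> gen_eigenspace L0 (k + of_int (n + 1 - h))"
      using mode_gen_eigenspace[OF L1_component_weight[of j h v] w(1), where n = "2 * h - int j - n - 2"]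
      by (simp add: algebra_simps)
    ultimately show "k \<in> contra_act_supp v n \<alpha>"
      using wt_supp_zero by (auto simp: contra_act_supp_def)
  qed
  have "clinear (contra_act YV om UNIV Y v n \<alpha>)"
    unfolding contra_act_UNIV
    by (intro clinear_functional_sum clinear_cmult clinear_compose[OF lin clinear_mode])
  then show "contra_act YV om UNIV Y v n \<alpha> \<in> contra UNIV Y om"
    using finite_subset[OF supp finite_contra_act_supp[OF \<alpha>]] by (simp add: contra_iff)
qed

lemma Wgen_subspace: "Wgen M Y om k = M \<inter> gen_eigenspace L0 k"
  by (auto simp: Wgen_def gen_eigenspace_def)

lemma gen_module_subspace:
  assumes M: "csubspace M" and modes: "\<And>v n w. w \<in> M \<Longrightarrow> Y v n w \<in> M"
    and graded: "\<And>k w. w \<in> M \<Longrightarrow> comp (Wgen UNIV Y om) k w \<in> M"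
  shows "gen_module YV vac om M Y"
  unfolding gen_module_def
proof (intro conjI allI ballI)
  show "clinear_on M (Y v n)" for v n
    using clinear_mode[of v n] by (simp add: clinear_on_def)
  show "jacobi YV M Y"
    using jacobi_module by (rule jacobi_restrict)
  show "dsum_decomp M (Wgen M Y om)"
    unfolding dsum_decomp_def
  proof
    fix w assume "w \<in> M"
    then have "comp (Wgen UNIV Y om) k w \<in> Wgen M Y om k" for k
      using graded W.comp_decomposition(2) by (simp add: Wgen_subspace Wgen_UNIV)
    then show "\<exists>f. finite {k. f k \<noteq> 0} \<and> (\<forall>k. f k \<in> Wgen M Y om k) \<and> w = (\<Sum>k\<in>{k. f k \<noteq> 0}. f k)"
      using W.comp_decomposition(1,3) by (intro exI[of _ "\<lambda>k. comp (Wgen UNIV Y om) k w"]) simp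
  qed
  have Wgen_M: "Wgen M Y om n \<subseteq> Wgen UNIV Y om n" for n
    by (simp add: Wgen_subspace Wgen_UNIV)
  show "fin_dim (Wgen M Y om n)" for n
    using fin_dim_Wgen[of n] Wgen_M[of n] unfolding fin_dim_def by blast
  have "0 \<in> Wgen M Y om m" for m
    using cv.subspace_0[OF M] cv.subspace_0[OF csubspace_gen_eigenspace[OF clinear_mode]]
    by (simp add: Wgen_subspace)
  then show "\<exists>K. \<forall>k<K. Wgen M Y om (n + of_int k) = {0}" for n
    using Wgen_vanishes_below[of n] Wgen_M by blast
qed (use M modes clinear_mode_vertex vacuum_mode truncation_int in blast)+

lemma ord_module_subspace:
  "ord_module YV vac om UNIV Y \<Longrightarrow> gen_module YV vac om M Y \<Longrightarrow> ord_module YV vac om M Y"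
  by (simp add: ord_module_def Wgen_subspace Wgen_UNIV)

lemma restrict0_in_contra:
  assumes M: "csubspace M" and \<alpha>: "\<alpha> \<in> contra UNIV Y om"
  shows "restrict0 M \<alpha> \<in> contra M Y om"
proof -
  have lin: "clinear \<alpha>" and fin: "finite (wt_supp \<alpha>)"
    using \<alpha> by (simp_all add: contra_iff)
  have supp: "{n. \<exists>w\<in>Wgen M Y om n. restrict0 M \<alpha> w \<noteq> 0} \<subseteq> wt_supp \<alpha>"
    unfolding wt_supp_def restrict0_def Wgen_subspace Wgen_UNIV by auto
  have "clinear_on M (restrict0 M \<alpha>)"
    unfolding clinear_on_def restrict0_def
    using cv.subspace_add[OF M] cv.subspace_scale[OF M] clinear_add[OF lin] clinear_scale[OF lin]
    by simp
  then show ?thesis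
    unfolding contra_def mem_Collect_eq
    using finite_subset[OF supp fin] by (simp add: restrict0_def)
qed

lemma contra_eq_sum_comp:
  assumes M: "csubspace M" and graded: "\<And>k w. w \<in> M \<Longrightarrow> comp (Wgen UNIV Y om) k w \<in> M"
    and \<beta>: "\<beta> \<in> contra M Y om" and w: "w \<in> M"
  shows "\<beta> w = (\<Sum>n\<in>{n. \<exists>x\<in>Wgen M Y om n. \<beta> x \<noteq> 0}. \<beta> (comp (Wgen UNIV Y om) n w))"
    (is "_ = (\<Sum>n\<in>?S. \<beta> (?c n))")
proof -
  have lin: "clinear_on M \<beta>" and fin: "finite ?S"
    using \<beta> by (simp_all add: contra_def)
  define D where "D = {n. ?c n \<noteq> 0}"
  have D: "finite D"
    using W.comp_decomposition(1) by (simp add: D_def)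
  have c: "?c n \<in> Wgen M Y om n" for n
    using graded[OF w] W.comp_decomposition(2) by (simp add: Wgen_subspace Wgen_UNIV)
  have "\<beta> w = \<beta> (\<Sum>n\<in>D. ?c n)"
    using W.comp_decomposition(3) by (simp add: D_def)
  also have "\<dots> = (\<Sum>n\<in>D. \<beta> (?c n))"
    using clinear_on_sum[OF M lin, of D ?c] graded[OF w] by simp
  also have "\<dots> = (\<Sum>n\<in>?S. \<beta> (?c n))"
  proof (rule sum.mono_neutral_cong[OF fin D])
    show "\<beta> (?c n) = 0" if "n \<in> ?S - D" for n
      using that clinear_on_zero[OF M lin] by (simp add: D_def)
    show "\<beta> (?c n) = 0" if "n \<in> D - ?S" for n
      using that c[of n] by blast
  qed simp
  finally show ?thesis .
qed

lemma contra_extend: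
  assumes M: "csubspace M" and graded: "\<And>k w. w \<in> M \<Longrightarrow> comp (Wgen UNIV Y om) k w \<in> M"
    and \<beta>: "\<beta> \<in> contra M Y om"
  obtains \<alpha> where "\<alpha> \<in> contra UNIV Y om" and "restrict0 M \<alpha> = \<beta>"
proof -
  let ?S = "{n. \<exists>x\<in>Wgen M Y om n. \<beta> x \<noteq> 0}"
  have lin: "clinear_on M \<beta>" and zero: "\<And>w. w \<notin> M \<Longrightarrow> \<beta> w = 0" and fin: "finite ?S"
    using \<beta> by (simp_all add: contra_def)
  obtain g where g: "clinear g" and g_eq: "\<And>w. w \<in> M \<Longrightarrow> g w = \<beta> w"
    using clinear_on_extend[OF M lin] by blast
  define \<alpha> where "\<alpha> w = (\<Sum>n\<in>?S. g (comp (Wgen UNIV Y om) n w))" for w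
  have "wt_supp \<alpha> \<subseteq> ?S"
  proof
    fix m assume "m \<in> wt_supp \<alpha>"
    then obtain w where w: "w \<in> Wgen UNIV Y om m" "\<alpha> w \<noteq> 0" by (auto simp: wt_supp_def)
    have "\<alpha> w = (\<Sum>n\<in>?S. if n = m then g w else 0)"
      unfolding \<alpha>_def using W.comp_homogeneous[OF w(1)] clinear_zero[OF g]
      by (intro sum.cong) auto
    also have "\<dots> = (if m \<in> ?S then g w else 0)"
      using fin by (rule sum.delta)
    finally show "m \<in> ?S" using w(2) by (simp split: if_split_asm)
  qed
  then have "finite (wt_supp \<alpha>)"
    using fin by (rule finite_subset)
  moreover have "clinear \<alpha>"
    unfolding \<alpha>_def by (intro clinear_functional_sum clinear_compose[OF g W.clinear_comp])
  ultimately have "\<alpha> \<in> contra UNIV Y om"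
    by (simp add: contra_iff)
  have "\<alpha> w = \<beta> w" if w: "w \<in> M" for w
  proof -
    have "\<alpha> w = (\<Sum>n\<in>?S. \<beta> (comp (Wgen UNIV Y om) n w))"
      unfolding \<alpha>_def using g_eq graded[OF w] by simp
    also have "\<dots> = \<beta> w"
      by (rule contra_eq_sum_comp[OF M graded \<beta> w, symmetric])
    finally show ?thesis .
  qed
  then have "restrict0 M \<alpha> = \<beta>"
    using zero by (auto simp: restrict0_def)
  with \<open>\<alpha> \<in> contra UNIV Y om\<close> show ?thesis by (rule that)
qed

lemma restrict0_contra:
  assumes M: "csubspace M" and graded: "\<And>k w. w \<in> M \<Longrightarrow> comp (Wgen UNIV Y om) k w \<in> M"
  shows "restrict0 M ` contra UNIV Y om = contra M Y om"
proof
  show "restrict0 M ` contra UNIV Y om \<subseteq> contra M Y om"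
    using restrict0_in_contra[OF M] by blast
  show "contra M Y om \<subseteq> restrict0 M ` contra UNIV Y om"
  proof
    fix \<beta> assume "\<beta> \<in> contra M Y om"
    then obtain \<alpha> where "\<alpha> \<in> contra UNIV Y om" "restrict0 M \<alpha> = \<beta>"
      using contra_extend[OF M graded] by blast
    then show "\<beta> \<in> restrict0 M ` contra UNIV Y om" by blast
  qed
qed

lemma restrict0_contra_act:
  assumes modes: "\<And>v n w. w \<in> M \<Longrightarrow> Y v n w \<in> M"
  shows "restrict0 M (contra_act YV om UNIV Y v n \<alpha>) = contra_act YV om M Y v n (restrict0 M \<alpha>)"
proof
  fix w
  show "restrict0 M (contra_act YV om UNIV Y v n \<alpha>) w = contra_act YV om M Y v n (restrict0 M \<alpha>) w"
  proof (cases "w \<in> M")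
    case True
    then show ?thesis by (simp add: restrict0_def contra_act_def modes)
  qed (simp add: restrict0_def contra_act_def)
qed

end

section \<open>Quasi-P(z)-intertwining maps\<close>

locale quasi_intertwining = voa_module YV vac om c Y3
  for YV :: "'v::cvs \<Rightarrow> int \<Rightarrow> 'v \<Rightarrow> 'v" and vac om :: 'v and c :: complex
    and Y3 :: "'v \<Rightarrow> int \<Rightarrow> 'c::cvs \<Rightarrow> 'c" +
  fixes z :: complex and Y1 :: "'v \<Rightarrow> int \<Rightarrow> 'a::cvs \<Rightarrow> 'a" and Y2 :: "'v \<Rightarrow> int \<Rightarrow> 'b::cvs \<Rightarrow> 'b"
    and F :: "'a \<Rightarrow> 'b \<Rightarrow> complex \<Rightarrow> 'c"
  assumes module1: "gen_module YV vac om UNIV Y1"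
    and intertwining: "quasi_intw YV om z Y1 Y2 Y3 F"
begin

lemma clinear_F_left: "clinear (\<lambda>w1. F w1 w2 k)"
  using intertwining by (simp add: quasi_intw_def)

lemma F_gen_eigenspace: "F w1 w2 k \<in> gen_eigenspace L0 k"
  using intertwining by (simp add: quasi_intw_def Wgen_UNIV)

lemma truncation1: "\<exists>N::nat. \<forall>m\<ge>N. Y1 v (int m) w1 = 0"
  using module1 truncation_from_int[of "\<lambda>n. Y1 v n w1" 0] by (simp add: gen_module_def)

definition intertwining_coeff :: "int \<Rightarrow> nat \<Rightarrow> complex" where
  "intertwining_coeff n m = (of_int (int m - n - 1) gchoose m) * (-1) ^ m * z powi (n - int m)"

lemma intertwining_identity:
  assumes "\<forall>m\<ge>N. Y1 v (int m) w1 = 0"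
  shows "bar_act UNIV Y3 om v n (F w1 w2) k - F w1 (Y2 v n w2) k
     = (\<Sum>m<N. intertwining_coeff n m *\<^sub>C F (Y1 v (int m) w1) w2 k)"
  using intertwining assms unfolding quasi_intw_def intertwining_coeff_def by (metis (no_types, lifting))

lemma mode_F:
  assumes u: "u \<in> Vgr YV om d" and N: "\<forall>m\<ge>N. Y1 u (int m) w1 = 0"
  shows "Y3 u n (F w1 w2 k) = F w1 (Y2 u n w2) (k + of_int (d - n - 1))
    + (\<Sum>m<N. intertwining_coeff n m *\<^sub>C F (Y1 u (int m) w1) w2 (k + of_int (d - n - 1)))"
  using bar_act_homogeneous[OF u F_gen_eigenspace, where p = n and k = "k + of_int (d - n - 1)"]
    intertwining_identity[OF N, of n w2 "k + of_int (d - n - 1)"]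
  by (simp add: algebra_simps)

definition F_span :: "'c set" where
  "F_span = cspan {F w1 w2 k | w1 w2 k. True}"

lemma F_in_F_span: "F w1 w2 k \<in> F_span"
  unfolding F_span_def by (rule cv.span_base) blast

lemma csubspace_F_span: "csubspace F_span"
  unfolding F_span_def by (rule cv.subspace_span)

lemma F_span_induct [consumes 1, case_names zero step]:
  assumes "x \<in> F_span" and "P 0" and "\<And>a w1 w2 k y. P y \<Longrightarrow> P (a *\<^sub>C F w1 w2 k + y)"
  shows "P x"
  using assms(1) unfolding F_span_def
  by (induction rule: cv.span_induct_alt) (use assms(2,3) in auto)

lemma clinear_image_F_span:
  assumes f: "clinear f" and gen: "\<And>w1 w2 k. f (F w1 w2 k) \<in> F_span" and x: "x \<in> F_span"
  shows "f x \<in> F_span"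
  using x
proof (induction rule: F_span_induct)
  case zero
  then show ?case using cv.subspace_0[OF csubspace_F_span] by (simp add: clinear_zero[OF f])
next
  case (step a w1 w2 k y)
  then show ?case
    using gen cv.subspace_add[OF csubspace_F_span] cv.subspace_scale[OF csubspace_F_span]
    by (simp add: clinear_add[OF f] clinear_scale[OF f])
qed

lemma mode_F_span:
  assumes w: "w \<in> F_span"
  shows "Y3 v n w \<in> F_span"
proof -
  have F_mode: "Y3 u n (F w1 w2 k) \<in> F_span" if u: "u \<in> Vgr YV om d" for u d w1 w2 k
  proof -
    obtain N where N: "\<forall>m\<ge>N. Y1 u (int m) w1 = 0"
      using truncation1 by blast
    show ?thesis
      unfolding mode_F[OF u N]
      by (intro cv.subspace_add[OF csubspace_F_span] cv.subspace_sum[OF csubspace_F_span]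
          cv.subspace_scale[OF csubspace_F_span] F_in_F_span)
  qed
  have "Y3 (comp (Vgr YV om) h v) n w \<in> F_span" for h
    by (intro clinear_image_F_span[OF clinear_mode _ w]) (use F_mode V.comp_decomposition(2) in blast)
  then have "(\<Sum>h\<in>{h. comp (Vgr YV om) h v \<noteq> 0}. Y3 (comp (Vgr YV om) h v) n w) \<in> F_span"
    by (intro cv.subspace_sum[OF csubspace_F_span])
  then show ?thesis
    by (simp add: V.comp_decomposition(3) flip: clinear_sum[OF clinear_mode_vertex])
qed

lemma comp_F_span:
  assumes w: "w \<in> F_span"
  shows "comp (Wgen UNIV Y3 om) k w \<in> F_span"
proof -
  have "comp (Wgen UNIV Y3 om) k (F w1 w2 k') \<in> F_span" for w1 w2 k'
    using W.comp_homogeneous[of "F w1 w2 k'" k' k] F_gen_eigenspace F_in_F_span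
      cv.subspace_0[OF csubspace_F_span]
    by (simp add: Wgen_UNIV)
  then show ?thesis
    by (rule clinear_image_F_span[OF W.clinear_comp _ w])
qed

lemma gen_module_F_span: "gen_module YV vac om F_span Y3"
  by (rule gen_module_subspace[OF csubspace_F_span mode_F_span comp_F_span])

lemma Fvee_eq_sum:
  assumes "finite T" "wt_supp \<alpha> \<subseteq> T"
  shows "Fvee F \<alpha> w1 w2 = (\<Sum>k\<in>T. \<alpha> (F w1 w2 k))"
  unfolding Fvee_def using assms F_gen_eigenspace by (rule pair_eq_sum)

lemma Fvee_eq_shifted_sum:
  assumes T: "finite T" "{k. k + s \<in> wt_supp \<alpha>} \<subseteq> T"
  shows "Fvee F \<alpha> w1 w2 = (\<Sum>k\<in>T. \<alpha> (F w1 w2 (k + s)))"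
proof -
  have "wt_supp \<alpha> \<subseteq> (\<lambda>k. k + s) ` T"
  proof
    fix x assume "x \<in> wt_supp \<alpha>"
    then have "x - s \<in> T" using T(2) by auto
    then show "x \<in> (\<lambda>k. k + s) ` T" by (rule image_eqI[rotated]) simp
  qed
  then have "Fvee F \<alpha> w1 w2 = (\<Sum>k\<in>(\<lambda>k. k + s) ` T. \<alpha> (F w1 w2 k))"
    using T(1) by (intro Fvee_eq_sum) simp_all
  also have "\<dots> = (\<Sum>k\<in>T. \<alpha> (F w1 w2 (k + s)))"
    by (simp add: sum.reindex inj_on_def)
  finally show ?thesis .
qed

lemma Fvee_add:
  assumes "\<alpha> \<in> contra UNIV Y3 om" "\<beta> \<in> contra UNIV Y3 om"
  shows "Fvee F (\<lambda>w. \<alpha> w + \<beta> w) = (\<lambda>w1 w2. Fvee F \<alpha> w1 w2 + Fvee F \<beta> w1 w2)"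
proof (intro ext)
  fix w1 w2
  let ?T = "wt_supp \<alpha> \<union> wt_supp \<beta>"
  have "finite ?T" using assms by (simp add: contra_iff)
  moreover have "wt_supp (\<lambda>w. \<alpha> w + \<beta> w) \<subseteq> ?T" by (auto simp: wt_supp_def)
  ultimately show "Fvee F (\<lambda>w. \<alpha> w + \<beta> w) w1 w2 = Fvee F \<alpha> w1 w2 + Fvee F \<beta> w1 w2"
    by (simp add: Fvee_eq_sum[of ?T] sum.distrib)
qed

lemma Fvee_scale:
  assumes "\<alpha> \<in> contra UNIV Y3 om"
  shows "Fvee F (\<lambda>w. a * \<alpha> w) = (\<lambda>w1 w2. a * Fvee F \<alpha> w1 w2)"
proof (intro ext)
  fix w1 w2
  have "finite (wt_supp \<alpha>)" using assms by (simp add: contra_iff)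
  moreover have "wt_supp (\<lambda>w. a * \<alpha> w) \<subseteq> wt_supp \<alpha>" by (auto simp: wt_supp_def)
  ultimately show "Fvee F (\<lambda>w. a * \<alpha> w) w1 w2 = a * Fvee F \<alpha> w1 w2"
    by (simp add: Fvee_eq_sum[of "wt_supp \<alpha>"] sum_distrib_left)
qed

lemma Fvee_diff:
  assumes "\<alpha> \<in> contra UNIV Y3 om" "\<beta> \<in> contra UNIV Y3 om"
  shows "Fvee F (\<lambda>w. \<alpha> w - \<beta> w) = (\<lambda>w1 w2. Fvee F \<alpha> w1 w2 - Fvee F \<beta> w1 w2)"
  using Fvee_add[OF assms(1) contra_scale[OF assms(2), of "-1"]] Fvee_scale[OF assms(2), of "-1"]
  by simp

lemma pair_mode_F:
  assumes \<alpha>: "\<alpha> \<in> contra UNIV Y3 om" and u: "u \<in> Vgr YV om d"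
    and T: "finite T" "{k. k + of_int (d - p - 1) \<in> wt_supp \<alpha>} \<subseteq> T"
  shows "(\<Sum>k\<in>T. \<alpha> (Y3 u p (F w1 w2 k)))
    = Fvee F \<alpha> w1 (Y2 u p w2)
      + (\<Sum>m\<in>{m. Y1 u (int m) w1 \<noteq> 0}. intertwining_coeff p m * Fvee F \<alpha> (Y1 u (int m) w1) w2)"
proof -
  let ?s = "of_int (d - p - 1) :: complex"
  have lin: "clinear \<alpha>" using \<alpha> by (simp add: contra_iff)
  obtain N where N: "\<forall>m\<ge>N. Y1 u (int m) w1 = 0"
    using truncation1 by blast
  have "(\<Sum>k\<in>T. \<alpha> (Y3 u p (F w1 w2 k)))
      = (\<Sum>k\<in>T. \<alpha> (F w1 (Y2 u p w2) (k + ?s)))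
        + (\<Sum>m<N. intertwining_coeff p m * (\<Sum>k\<in>T. \<alpha> (F (Y1 u (int m) w1) w2 (k + ?s))))"
    by (simp add: mode_F[OF u N] clinear_add[OF lin] clinear_sum[OF lin] clinear_scale[OF lin]
        sum.distrib sum_distrib_left sum.swap[of _ T])
  also have "\<dots> = Fvee F \<alpha> w1 (Y2 u p w2) + (\<Sum>m<N. intertwining_coeff p m * Fvee F \<alpha> (Y1 u (int m) w1) w2)"
    by (simp add: Fvee_eq_shifted_sum[OF T])
  also have "(\<Sum>m<N. intertwining_coeff p m * Fvee F \<alpha> (Y1 u (int m) w1) w2)
      = (\<Sum>m\<in>{m. Y1 u (int m) w1 \<noteq> 0}. intertwining_coeff p m * Fvee F \<alpha> (Y1 u (int m) w1) w2)"
  proof (rule sum.mono_neutral_right)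
    show "{m. Y1 u (int m) w1 \<noteq> 0} \<subseteq> {..<N}"
      using N by (auto simp: not_less[symmetric])
    have "Fvee F \<alpha> 0 w2 = 0"
      using \<alpha> by (simp add: Fvee_eq_sum[of "wt_supp \<alpha>"] contra_iff clinear_zero[OF clinear_F_left]
          clinear_zero[OF lin])
    then show "\<forall>m\<in>{..<N} - {m. Y1 u (int m) w1 \<noteq> 0}. intertwining_coeff p m * Fvee F \<alpha> (Y1 u (int m) w1) w2 = 0"
      by simp
  qed simp
  finally show ?thesis .
qed

definition Fvee_kernel :: "('c \<Rightarrow> complex) set" where
  "Fvee_kernel = {\<alpha> \<in> contra UNIV Y3 om. Fvee F \<alpha> = (\<lambda>w1 w2. 0)}"

lemma Fvee_kernel_L0:
  assumes \<alpha>: "\<alpha> \<in> Fvee_kernel"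
  shows "(\<lambda>w. \<alpha> (L0 w)) \<in> Fvee_kernel"
proof -
  have \<alpha>': "\<alpha> \<in> contra UNIV Y3 om" "finite (wt_supp \<alpha>)" "clinear \<alpha>"
    and zero: "Fvee F \<alpha> = (\<lambda>w1 w2. 0)"
    using \<alpha> by (simp_all add: Fvee_kernel_def contra_iff)
  have supp: "wt_supp (\<lambda>w. \<alpha> (L0 w)) \<subseteq> wt_supp \<alpha>"
    unfolding wt_supp_def Wgen_UNIV using gen_eigenspace_closed[OF clinear_mode] by blast
  have "Fvee F (\<lambda>w. \<alpha> (L0 w)) w1 w2 = 0" for w1 w2
  proof -
    have "Fvee F (\<lambda>w. \<alpha> (L0 w)) w1 w2 = (\<Sum>k\<in>wt_supp \<alpha>. \<alpha> (L0 (F w1 w2 k)))"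
      using \<alpha>'(2) supp by (rule Fvee_eq_sum)
    also have "\<dots> = 0"
      using pair_mode_F[OF \<alpha>'(1) omega_weight \<alpha>'(2), of 1 w1 w2] zero by simp
    finally show ?thesis .
  qed
  moreover have "(\<lambda>w. \<alpha> (L0 w)) \<in> contra UNIV Y3 om"
    using \<alpha>' supp by (auto simp: contra_iff intro: clinear_compose[OF _ clinear_mode] finite_subset)
  ultimately show ?thesis by (auto simp: Fvee_kernel_def)
qed

lemma Fvee_kernel_poly_op:
  "\<alpha> \<in> Fvee_kernel \<Longrightarrow> (\<lambda>w. \<alpha> (poly_op L0 p w)) \<in> Fvee_kernel"
proof (induction p arbitrary: \<alpha>)
  case 0
  then have "(\<lambda>w. 0 * \<alpha> w) \<in> Fvee_kernel"
    using contra_scale[of \<alpha> 0] Fvee_scale[of \<alpha> 0] by (simp only: Fvee_kernel_def mem_Collect_eq) simp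
  moreover have "\<alpha> 0 = 0"
    using 0 clinear_zero[of \<alpha>] by (simp add: Fvee_kernel_def contra_iff)
  ultimately show ?case by simp
next
  case (pCons a p)
  have lin: "clinear \<alpha>" using pCons.prems by (simp add: Fvee_kernel_def contra_iff)
  have "(\<lambda>w. \<alpha> (poly_op L0 (pCons a p) w)) = (\<lambda>w. a * \<alpha> w + \<alpha> (L0 (poly_op L0 p w)))"
    by (simp add: poly_op_pCons[OF clinear_mode] clinear_add[OF lin] clinear_scale[OF lin])
  also have "\<dots> \<in> Fvee_kernel"
    using pCons.prems pCons.IH[OF Fvee_kernel_L0[OF pCons.prems]]
    by (simp add: Fvee_kernel_def contra_add contra_scale Fvee_add Fvee_scale)
  finally show ?case .
qed

lemma Fvee_kernel_F:
  assumes \<alpha>: "\<alpha> \<in> Fvee_kernel"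
  shows "\<alpha> (F w1 w2 k0) = 0"
proof (cases "k0 \<in> wt_supp \<alpha>")
  case False
  then show ?thesis using wt_supp_zero F_gen_eigenspace by blast
next
  case True
  have fin: "finite (wt_supp \<alpha>)" and lin: "clinear \<alpha>"
    using \<alpha> by (simp_all add: Fvee_kernel_def contra_iff)
  obtain p where p: "poly_op L0 p (F w1 w2 k0) = F w1 w2 k0"
    "\<And>k. k \<in> wt_supp \<alpha> - {k0} \<Longrightarrow> poly_op L0 p (F w1 w2 k) = 0"
    using gen_eigenspace_projection[OF clinear_mode[of om 1] fin True, where g = "\<lambda>k. k" and x = "F w1 w2"]
      F_gen_eigenspace
    unfolding inj_on_def by blast
  let ?\<beta> = "\<lambda>w. \<alpha> (poly_op L0 p w)"
  have "wt_supp ?\<beta> \<subseteq> wt_supp \<alpha>"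
    unfolding wt_supp_def Wgen_UNIV using poly_op_gen_eigenspace[OF clinear_mode] by blast
  then have "Fvee F ?\<beta> w1 w2 = (\<Sum>k\<in>wt_supp \<alpha>. ?\<beta> (F w1 w2 k))"
    by (rule Fvee_eq_sum[OF fin])
  also have "\<dots> = \<alpha> (F w1 w2 k0)"
    using p clinear_zero[OF lin] by (simp add: sum.remove[OF fin True])
  finally show ?thesis
    using Fvee_kernel_poly_op[OF \<alpha>] by (simp add: Fvee_kernel_def)
qed

lemma Fvee_kernel_eq: "Fvee_kernel = {\<alpha> \<in> contra UNIV Y3 om. \<forall>w\<in>F_span. \<alpha> w = 0}"
proof (intro set_eqI iffI)
  fix \<alpha> assume \<alpha>: "\<alpha> \<in> Fvee_kernel"
  then have "clinear \<alpha>" by (simp add: Fvee_kernel_def contra_iff)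
  have "\<alpha> w = 0" if "w \<in> F_span" for w
    using that
  proof (induction rule: F_span_induct)
    case (step a w1 w2 k y)
    then show ?case
      by (simp add: clinear_add[OF \<open>clinear \<alpha>\<close>] clinear_scale[OF \<open>clinear \<alpha>\<close>] Fvee_kernel_F[OF \<alpha>])
  qed (simp add: clinear_zero[OF \<open>clinear \<alpha>\<close>])
  then show "\<alpha> \<in> {\<alpha> \<in> contra UNIV Y3 om. \<forall>w\<in>F_span. \<alpha> w = 0}"
    using \<alpha> by (simp add: Fvee_kernel_def)
next
  fix \<alpha> assume "\<alpha> \<in> {\<alpha> \<in> contra UNIV Y3 om. \<forall>w\<in>F_span. \<alpha> w = 0}"
  then have \<alpha>: "\<alpha> \<in> contra UNIV Y3 om" and zero: "\<forall>w\<in>F_span. \<alpha> w = 0" by auto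
  have "Fvee F \<alpha> w1 w2 = 0" for w1 w2
    using Fvee_eq_sum[of "wt_supp \<alpha>" \<alpha> w1 w2] \<alpha> zero F_in_F_span by (simp add: contra_iff)
  with \<alpha> show "\<alpha> \<in> Fvee_kernel"
    by (auto simp: Fvee_kernel_def)
qed

lemma tau_Fvee:
  assumes \<alpha>: "\<alpha> \<in> contra UNIV Y3 om"
  shows "tau YV om z Y1 Y2 v n (Fvee F \<alpha>) = Fvee F (contra_act YV om UNIV Y3 v n \<alpha>)"
proof (intro ext)
  fix w1 w2
  let ?H = "{h. comp (Vgr YV om) h v \<noteq> 0}"
  let ?J = "\<lambda>h. {j. (YV om 2 ^^ j) (comp (Vgr YV om) h v) \<noteq> 0}"
  let ?u = "\<lambda>h j. (YV om 2 ^^ j) (comp (Vgr YV om) h v)"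
  let ?p = "\<lambda>h j. 2 * h - int j - n - 2"
  let ?c = "\<lambda>h j. ((-1) powi h / of_nat (fact j)) :: complex"
  let ?T = "contra_act_supp v n \<alpha>"
  have T: "finite ?T"
    by (rule finite_contra_act_supp[OF \<alpha>])
  have "Fvee F (contra_act YV om UNIV Y3 v n \<alpha>) w1 w2
      = (\<Sum>k\<in>?T. contra_act YV om UNIV Y3 v n \<alpha> (F w1 w2 k))"
    by (rule Fvee_eq_sum[OF T contra_act_in_contra(2)[OF \<alpha>]])
  also have "\<dots> = (\<Sum>h\<in>?H. \<Sum>j\<in>?J h. ?c h j * (\<Sum>k\<in>?T. \<alpha> (Y3 (?u h j) (?p h j) (F w1 w2 k))))"
    by (simp add: contra_act_UNIV sum.swap[of _ ?T] sum_distrib_left)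
  also have "\<dots> = (\<Sum>h\<in>?H. \<Sum>j\<in>?J h. ?c h j * (Fvee F \<alpha> w1 (Y2 (?u h j) (?p h j) w2)
      + (\<Sum>m\<in>{m. Y1 (?u h j) (int m) w1 \<noteq> 0}. intertwining_coeff (?p h j) m * Fvee F \<alpha> (Y1 (?u h j) (int m) w1) w2)))"
  proof (intro sum.cong refl)
    fix h j assume h: "h \<in> ?H"
    have "(h - int j) - ?p h j - 1 = n + 1 - h" by simp
    moreover have "{k. k + of_int (n + 1 - h) \<in> wt_supp \<alpha>} \<subseteq> ?T"
      using h unfolding contra_act_supp_def by blast
    ultimately have "{k. k + of_int ((h - int j) - ?p h j - 1) \<in> wt_supp \<alpha>} \<subseteq> ?T"
      by (simp only:)
    then show "?c h j * (\<Sum>k\<in>?T. \<alpha> (Y3 (?u h j) (?p h j) (F w1 w2 k))) = ?c h j * (Fvee F \<alpha> w1 (Y2 (?u h j) (?p h j) w2)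
      + (\<Sum>m\<in>{m. Y1 (?u h j) (int m) w1 \<noteq> 0}. intertwining_coeff (?p h j) m * Fvee F \<alpha> (Y1 (?u h j) (int m) w1) w2))"
      by (simp only: pair_mode_F[OF \<alpha> L1_component_weight T])
  qed
  also have "\<dots> = tau YV om z Y1 Y2 v n (Fvee F \<alpha>) w1 w2"
    unfolding tau_def Let_def intertwining_coeff_def by (intro sum.cong refl) (simp add: algebra_simps)
  finally show "tau YV om z Y1 Y2 v n (Fvee F \<alpha>) w1 w2 = Fvee F (contra_act YV om UNIV Y3 v n \<alpha>) w1 w2"
    by simp
qed

lemma Fvee_eq_iff_restrict0_eq:
  assumes "\<alpha> \<in> contra UNIV Y3 om" "\<beta> \<in> contra UNIV Y3 om"
  shows "Fvee F \<alpha> = Fvee F \<beta> \<longleftrightarrow> restrict0 F_span \<alpha> = restrict0 F_span \<beta>"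
proof -
  have "Fvee F \<alpha> = Fvee F \<beta> \<longleftrightarrow> (\<lambda>w. \<alpha> w - \<beta> w) \<in> Fvee_kernel"
    using Fvee_diff[OF assms] contra_diff[OF assms] by (auto simp: Fvee_kernel_def fun_eq_iff)
  also have "\<dots> \<longleftrightarrow> (\<forall>w\<in>F_span. \<alpha> w - \<beta> w = 0)"
    using contra_diff[OF assms] by (simp add: Fvee_kernel_eq)
  also have "\<dots> \<longleftrightarrow> restrict0 F_span \<alpha> = restrict0 F_span \<beta>"
    by (auto simp: restrict0_def fun_eq_iff)
  finally show ?thesis .
qed

lemma Fvee_image_iso_contra:
  "\<exists>\<phi>. bij_betw \<phi> (Fvee F ` contra UNIV Y3 om) (contra F_span Y3 om)
    \<and> (\<forall>l1\<in>Fvee F ` contra UNIV Y3 om. \<forall>l2\<in>Fvee F ` contra UNIV Y3 om.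
         \<phi> (\<lambda>w1 w2. l1 w1 w2 + l2 w1 w2) = (\<lambda>w. \<phi> l1 w + \<phi> l2 w))
    \<and> (\<forall>a. \<forall>lam\<in>Fvee F ` contra UNIV Y3 om. \<phi> (\<lambda>w1 w2. a * lam w1 w2) = (\<lambda>w. a * \<phi> lam w))
    \<and> (\<forall>v n. \<forall>lam\<in>Fvee F ` contra UNIV Y3 om.
         \<phi> (tau YV om z Y1 Y2 v n lam) = contra_act YV om F_span Y3 v n (\<phi> lam))"
proof -
  let ?C = "contra UNIV Y3 om"
  obtain \<phi> where bij: "bij_betw \<phi> (Fvee F ` ?C) (restrict0 F_span ` ?C)"
    and \<phi>: "\<And>\<alpha>. \<alpha> \<in> ?C \<Longrightarrow> \<phi> (Fvee F \<alpha>) = restrict0 F_span \<alpha>"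
    using bij_betw_same_fibres[of ?C "Fvee F" "restrict0 F_span"] Fvee_eq_iff_restrict0_eq by blast
  show ?thesis
  proof (intro exI conjI ballI allI)
    show "bij_betw \<phi> (Fvee F ` ?C) (contra F_span Y3 om)"
      using bij restrict0_contra[OF csubspace_F_span comp_F_span] by simp
  next
    fix l1 l2 assume "l1 \<in> Fvee F ` ?C" "l2 \<in> Fvee F ` ?C"
    then obtain \<alpha>1 \<alpha>2 where \<alpha>: "\<alpha>1 \<in> ?C" "\<alpha>2 \<in> ?C" and l: "l1 = Fvee F \<alpha>1" "l2 = Fvee F \<alpha>2"
      by blast
    show "\<phi> (\<lambda>w1 w2. l1 w1 w2 + l2 w1 w2) = (\<lambda>w. \<phi> l1 w + \<phi> l2 w)"
      using \<phi>[OF contra_add[OF \<alpha>]] \<phi>[OF \<alpha>(1)] \<phi>[OF \<alpha>(2)]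
      by (simp add: l Fvee_add[OF \<alpha>, symmetric] restrict0_def fun_eq_iff)
  next
    fix a l assume "l \<in> Fvee F ` ?C"
    then obtain \<alpha> where \<alpha>: "\<alpha> \<in> ?C" and l: "l = Fvee F \<alpha>"
      by blast
    show "\<phi> (\<lambda>w1 w2. a * l w1 w2) = (\<lambda>w. a * \<phi> l w)"
      using \<phi>[OF contra_scale[OF \<alpha>]] \<phi>[OF \<alpha>]
      by (simp add: l Fvee_scale[OF \<alpha>, symmetric] restrict0_def fun_eq_iff)
  next
    fix v n l assume "l \<in> Fvee F ` ?C"
    then obtain \<alpha> where \<alpha>: "\<alpha> \<in> ?C" and l: "l = Fvee F \<alpha>"
      by blast
    show "\<phi> (tau YV om z Y1 Y2 v n l) = contra_act YV om F_span Y3 v n (\<phi> l)"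
      using \<phi>[OF contra_act_in_contra(1)[OF \<alpha>]] \<phi>[OF \<alpha>]
      by (simp add: l tau_Fvee[OF \<alpha>] restrict0_contra_act[OF mode_F_span])
  qed
qed

end

theorem mainTheorem3:
  fixes YV :: "'v::cvs \<Rightarrow> int \<Rightarrow> 'v \<Rightarrow> 'v" and vac om :: 'v and c z :: complex
    and Y1 :: "'v \<Rightarrow> int \<Rightarrow> 'a::cvs \<Rightarrow> 'a"
    and Y2 :: "'v \<Rightarrow> int \<Rightarrow> 'b::cvs \<Rightarrow> 'b"
    and Y3 :: "'v \<Rightarrow> int \<Rightarrow> 'c::cvs \<Rightarrow> 'c"
    and F :: "'a \<Rightarrow> 'b \<Rightarrow> complex \<Rightarrow> 'c"
  assumes "VOA YV vac om c"
    and "z \<noteq> 0"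
    and "gen_module YV vac om UNIV Y1"
    and "gen_module YV vac om UNIV Y2"
    and "gen_module YV vac om UNIV Y3"
    and "quasi_intw YV om z Y1 Y2 Y3 F"
  defines "W \<equiv> cspan {F w1 w2 k | w1 w2 k. True}"
  defines "K \<equiv> {\<alpha> \<in> contra UNIV Y3 om. \<forall>w\<in>W. \<alpha> w = 0}"
  shows "gen_module YV vac om W Y3
    \<and> (ord_module YV vac om UNIV Y3 \<longrightarrow> ord_module YV vac om W Y3)
    \<and> {\<alpha> \<in> contra UNIV Y3 om. Fvee F \<alpha> = (\<lambda>w1 w2. 0)} = K
    \<and> (\<lambda>\<alpha> w. if w \<in> W then \<alpha> w else 0) ` contra UNIV Y3 om = contra W Y3 om
    \<and> {\<alpha> \<in> contra UNIV Y3 om. (\<lambda>w. if w \<in> W then \<alpha> w else 0) = (\<lambda>w. 0)} = K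
    \<and> (\<exists>\<phi>. bij_betw \<phi> (Fvee F ` contra UNIV Y3 om) (contra W Y3 om)
         \<and> (\<forall>l1\<in>Fvee F ` contra UNIV Y3 om. \<forall>l2\<in>Fvee F ` contra UNIV Y3 om.
               \<phi> (\<lambda>w1 w2. l1 w1 w2 + l2 w1 w2) = (\<lambda>w. \<phi> l1 w + \<phi> l2 w))
         \<and> (\<forall>a. \<forall>lam\<in>Fvee F ` contra UNIV Y3 om. \<phi> (\<lambda>w1 w2. a * lam w1 w2) = (\<lambda>w. a * \<phi> lam w))
         \<and> (\<forall>v n. \<forall>lam\<in>Fvee F ` contra UNIV Y3 om.
               \<phi> (tau YV om z Y1 Y2 v n lam) = contra_act YV om W Y3 v n (\<phi> lam)))"
proof -
  interpret quasi_intertwining YV vac om c Y3 z Y1 Y2 F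
    by unfold_locales (fact assms)+
  have W: "W = F_span"
    by (simp add: W_def F_span_def)
  have "ord_module YV vac om UNIV Y3 \<longrightarrow> ord_module YV vac om F_span Y3"
    using ord_module_subspace gen_module_F_span by blast
  then show ?thesis
    unfolding K_def W restrict0_def[symmetric] restrict0_eq_zero_iff
    using gen_module_F_span Fvee_kernel_eq[unfolded Fvee_kernel_def]
      restrict0_contra[OF csubspace_F_span comp_F_span] Fvee_image_iso_contra
    by (simp only:)
qed

end
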